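(* For every $d$ with $0\le d\le\rho(m)-1$ and every integer $t$ with $0\le t\le \rho(m)(k-1-p_d)+d$, we have $z(L_1(d)+h+t,\,d)=w(h+t,\,d)$.
   Context: For $u\in\mathbb{R}$ let $\mathbf 1[u]=1$ if $u\ge 0$ and $\mathbf 1[u]=0$ if $u<0$. Let $m$ be a positive integer and let $\rho(m)$ denote the number of primes $p$ with $2m<p<3m$; assume $\rho(m)\ge 2$. List these primes as $p_0>p_1>\dots>p_{\rho(m)-1}$ and put $\alpha_i=3m-p_i$. Let $k=(6m-1)\rho(m)$, $\mu_i=\lfloor k/p_i\rfloor$, $\beta_i=k-p_i\mu_i$. Define weights $\bar a_j$, $1\le j\le k$: if $\rho(m)$ is even, $\bar a_j=2$ if $j=\ell p_i$ for some $i$ and some $\ell$ with $1\le \ell\le 3\rho(m)/2$, $\bar a_j=-2$ if $j=\ell p_i$ with $3\rho(m)/2<\ell\le 2\rho(m)$, and $\bar a_j=0$ otherwise; if $\rho(m)$ is odd, $\bar a_j=2$ if $j=\ell p_i$ with $1\le\ell\le (3\rho(m)-1)/2$, $\bar a_j=-2$ if $j=\ell p_i$ with $(3\rho(m)+1)/2\le \ell\le 2\rho(m)-2$, $\bar a_j=-1$ if $j=\ell p_i$ with $\ell\in\{2\rho(m)-1,2\rho(m)\}$, and $\bar a_j=0$ otherwise (well defined since the sets $\{\ell p_i:1\le\ell\le2\rho(m)\}$ are pairwise disjoint). Let $\bar\theta=2\rho(m)$. For each $i$ define $x^{\alpha_i}(t)$ for $0\le t\le k-1$ by $x^{\alpha_i}(t)=1$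 if $t=\beta_i+\ell p_i$ for some $0\le \ell\le\mu_i-1$ and $x^{\alpha_i}(t)=0$ otherwise, and for $t\ge k$ by $x^{\alpha_i}(t)=\mathbf 1\big[\sum_{j=1}^k \bar a_j x^{\alpha_i}(t-j)-\bar\theta\big]$. Let $h=\rho(m)k$. For $1\le f\le h$ let $b_f=\bar a_j$ if $f=\rho(m)j$ with $1\le j\le k$, and $b_f=0$ otherwise. Define $(y(n))_{n\ge0}$ by $y(\rho(m)j+i)=x^{\alpha_i}(1+j)$ for $0\le j\le k-1$, $0\le i\le\rho(m)-1$, and $y(n)=\mathbf 1\big[\sum_{f=1}^h b_f y(n-f)-\bar\theta\big]$ for $n\ge h$. Let $L_1(d)=\rho(m)\cdot\mathrm{lcm}(p_0,\dots,p_d)$ for $0\le d\le\rho(m)-1$. For $0\le d\le\rho(m)-1$ define $(w(n,d))_{n\ge0}$ by: for $0\le i\le d$, $w(\rho(m)j+i,d)=x^{\alpha_i}(1+j)$ for $0\le j\le k-2$ and $w(\rho(m)(k-1)+i,d)=1-x^{\alpha_i}(k)$; for $d+1\le i\le\rho(m)-1$ and $0\le j\le k-1$, $w(\rho(m)j+i,d)=y(\rho(m)j+i+L_1(d))$; and $w(n,d)=\mathbf 1\big[\sum_{f=1}^h b_f w(n-f,d)-\bar\theta\big]$ for $n\ge h$. For $0\le d\le\rho(m)-1$ let $B_0(d)=\{f\in\mathbb Z:\ 1\le f\le h-d,\ y(h+L_1(d)-\rho(m)-f)=1\}$, $B_{\ell+1}(d)=\{1+f: f\in B_\ell(d)\}$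 for $\ell\ge0$, $A(d)=\bigcup_{\ell=0}^{d}B_\ell(d)$, and $Tot(d)=|B_0(d)|$. Fix a real number $\lambda$ with $-1\le\lambda<0$. Put $\beta(d)=\lambda/Tot(d)$, $\xi(d)=\lambda-\beta(d)/8$, $\theta_2(d)=\bar\theta+\xi(d)$, and for $1\le f\le h$ let $c(f,d)=b_f+\beta(d)$ if $f\in A(d)$ and $c(f,d)=b_f$ otherwise. Define $(z(n,d))_{n\ge0}$ by $z(n,d)=y(n)$ for $0\le n\le h-1$ and $z(n,d)=\mathbf 1\big[\sum_{f=1}^h c(f,d)\,z(n-f,d)-\theta_2(d)\big]$ for $n\ge h$. *)

theory Defs
  imports Complex_Main "HOL-Computational_Algebra.Primes"
begin

definition step :: "real \<Rightarrow> real" where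
  "step u = (if u \<ge> 0 then 1 else 0)"

function thr_seq :: "(nat \<Rightarrow> real) \<Rightarrow> nat \<Rightarrow> (nat \<Rightarrow> real) \<Rightarrow> real \<Rightarrow> nat \<Rightarrow> real" where
  "thr_seq a H init th n =
     (if n < H then init n
      else step ((\<Sum>f = 1..H. a f * thr_seq a H init th (n - f)) - th))"
  by pat_completeness auto
termination
  by (relation "measure (\<lambda>(a, H, init, th, n). n)") auto

definition prime_set :: "nat \<Rightarrow> nat set" where
  "prime_set m = {p. prime p \<and> 2 * m < p \<and> p < 3 * m}"

definition rho :: "nat \<Rightarrow> nat" where
  "rho m = card (prime_set m)"

definition pr :: "nat \<Rightarrow> nat \<Rightarrow> nat" where
  "pr m i = rev (sorted_list_of_set (prime_set m)) ! i"

definition alpha :: "nat \<Rightarrow> nat \<Rightarrow> nat" where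
  "alpha m i = 3 * m - pr m i"

definition kk :: "nat \<Rightarrow> nat" where
  "kk m = (6 * m - 1) * rho m"

definition mu :: "nat \<Rightarrow> nat \<Rightarrow> nat" where
  "mu m i = kk m div pr m i"

definition beta :: "nat \<Rightarrow> nat \<Rightarrow> nat" where
  "beta m i = kk m - pr m i * mu m i"

definition abar :: "nat \<Rightarrow> nat \<Rightarrow> real" where
  "abar m j =
    (let r = rho m in
     if even r then
       (if \<exists>i<r. \<exists>l. 1 \<le> l \<and> l \<le> 3 * r div 2 \<and> j = l * pr m i then 2
        else if \<exists>i<r. \<exists>l. 3 * r div 2 < l \<and> l \<le> 2 * r \<and> j = l * pr m i then -2
        else 0)
     else
       (if \<exists>i<r. \<exists>l. 1 \<le> l \<and> l \<le> (3 * r - 1) div 2 \<and> j = l * pr m i then 2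
        else if \<exists>i<r. \<exists>l. (3 * r + 1) div 2 \<le> l \<and> l \<le> 2 * r - 2 \<and> j = l * pr m i then -2
        else if \<exists>i<r. \<exists>l. (l = 2 * r - 1 \<or> l = 2 * r) \<and> j = l * pr m i then -1
        else 0))"

definition thetabar :: "nat \<Rightarrow> real" where
  "thetabar m = 2 * real (rho m)"

text \<open>x^{alpha_i}(t), indexed by i.\<close>
definition xs :: "nat \<Rightarrow> nat \<Rightarrow> nat \<Rightarrow> real" where
  "xs m i = thr_seq (abar m) (kk m)
      (\<lambda>t. if \<exists>l. l < mu m i \<and> t = beta m i + l * pr m i then 1 else 0)
      (thetabar m)"

definition hh :: "nat \<Rightarrow> nat" where
  "hh m = rho m * kk m"

definition bb :: "nat \<Rightarrow> nat \<Rightarrow> real" where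
  "bb m f = (if \<exists>j. 1 \<le> j \<and> j \<le> kk m \<and> f = rho m * j then abar m (f div rho m) else 0)"

definition ys :: "nat \<Rightarrow> nat \<Rightarrow> real" where
  "ys m = thr_seq (bb m) (hh m)
      (\<lambda>n. xs m (n mod rho m) (1 + n div rho m))
      (thetabar m)"

definition L1 :: "nat \<Rightarrow> nat \<Rightarrow> nat" where
  "L1 m d = rho m * Lcm (pr m ` {0..d})"

definition ws :: "nat \<Rightarrow> nat \<Rightarrow> nat \<Rightarrow> real" where
  "ws m d = thr_seq (bb m) (hh m)
      (\<lambda>n. let i = n mod rho m; j = n div rho m in
           if i \<le> d then (if j \<le> kk m - 2 then xs m i (1 + j) else 1 - xs m i (kk m))
           else ys m (n + L1 m d))
      (thetabar m)"

definition B0 :: "nat \<Rightarrow> nat \<Rightarrow> nat set" where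
  "B0 m d = {f. 1 \<le> f \<and> f \<le> hh m - d \<and> ys m (hh m + L1 m d - rho m - f) = 1}"

definition Bl :: "nat \<Rightarrow> nat \<Rightarrow> nat \<Rightarrow> nat set" where
  "Bl m d l = (\<lambda>f. l + f) ` B0 m d"

definition AA :: "nat \<Rightarrow> nat \<Rightarrow> nat set" where
  "AA m d = (\<Union>l\<in>{0..d}. Bl m d l)"

definition Tot :: "nat \<Rightarrow> nat \<Rightarrow> nat" where
  "Tot m d = card (B0 m d)"

definition betad :: "real \<Rightarrow> nat \<Rightarrow> nat \<Rightarrow> real" where
  "betad lam m d = lam / real (Tot m d)"

definition xi :: "real \<Rightarrow> nat \<Rightarrow> nat \<Rightarrow> real" where
  "xi lam m d = lam - betad lam m d / 8"

definition theta2 :: "real \<Rightarrow> nat \<Rightarrow> nat \<Rightarrow> real" where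
  "theta2 lam m d = thetabar m + xi lam m d"

definition cc :: "real \<Rightarrow> nat \<Rightarrow> nat \<Rightarrow> nat \<Rightarrow> real" where
  "cc lam m d f = (if f \<in> AA m d then bb m f + betad lam m d else bb m f)"

definition zs :: "real \<Rightarrow> nat \<Rightarrow> nat \<Rightarrow> nat \<Rightarrow> real" where
  "zs lam m d = thr_seq (cc lam m d) (hh m) (ys m) (theta2 lam m d)"

end

theory Submission
  imports Defs
begin

(* All sequences involved are eventually periodic and can be written in closed form.  The kernel
   weight abar is supported on the multiples l * p_i (1 <= l <= 2 rho), with a weight wt(l)
   depending only on l; its partial sums over l are >= 2 and its full sum is 2 rho = thetabar.
   Hence a channel with period p_i reproduces itself (the kernel sum is exactly 2 rho at its
   firing times and at most 2 rho - 2 elsewhere): x^{alpha_i}(t) = [t = k (mod p_i)], y is the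
   interleaving of these channels, and w is y shifted by L1(d) with channels 0..d cut off.
   For z we guess the closed form zcf: y with channels 0..d switched off after block L + k - 2,
   where L = lcm(p_0,...,p_d) and L1(d) = rho L.  The unperturbed kernel sum decides zcf
   correctly except at the kill times n0 + l (l <= d), where it reaches 2 rho although zcf is 0.
   The perturbation beta(d) on A(d) repairs exactly this: counting the active points of A(d)
   residue class by residue class shows that fewer than Tot(d) of them are active at firing
   times, and all Tot(d) of them at kill times.  Finally zcf (rho L + n) = wcf n for every n,
   which gives the theorem. *)

declare thr_seq.simps[simp del]

lemma thr_seq_eq:
  assumes "\<And>n. n < H \<Longrightarrow> init n = F n"
    and "\<And>n. H \<le> n \<Longrightarrow> step ((\<Sum>f = 1..H. a f * F (n - f)) - th) = F n"
  shows "thr_seq a H init th n = F n"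
proof (induction n rule: less_induct)
  case (less n)
  show ?case
  proof (cases "n < H")
    case True
    then show ?thesis using assms(1) by (simp add: thr_seq.simps[of a H init th n])
  next
    case False
    have "(\<Sum>f = 1..H. a f * thr_seq a H init th (n - f)) = (\<Sum>f = 1..H. a f * F (n - f))"
      by (rule sum.cong) (use False less in auto)
    then show ?thesis using False assms(2)[of n] by (simp add: thr_seq.simps[of a H init th n])
  qed
qed

lemma step_nonneg: "x \<ge> 0 \<Longrightarrow> step x = 1" by (simp add: step_def)
lemma step_neg: "x < 0 \<Longrightarrow> step x = 0" by (simp add: step_def)

lemma sum_single_support_le:
  assumes "finite S" "\<And>l. l \<in> S \<Longrightarrow> \<phi> l = 0 \<or> \<phi> l = 1" "\<And>l. l \<in> S \<Longrightarrow> G l \<le> 2"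
    "card {l\<in>S. \<phi> l \<noteq> 0} \<le> 1"
  shows "(\<Sum>l\<in>S. G l * \<phi> l) \<le> (2::real)"
proof -
  define T where "T = {l\<in>S. \<phi> l \<noteq> 0}"
  have "(\<Sum>l\<in>S. G l * \<phi> l) = (\<Sum>l\<in>T. G l * \<phi> l)"
    by (rule sum.mono_neutral_right) (use assms(1) in \<open>auto simp: T_def\<close>)
  also have "\<dots> \<le> 2"
  proof (cases "T = {}")
    case False
    then obtain x where x: "x \<in> T" by blast
    have "finite T" using assms(1) by (simp add: T_def)
    then have "T = {x}" using x assms(4) card_le_Suc0_iff_eq unfolding T_def[symmetric] by auto
    moreover have "\<phi> x = 1" "G x \<le> 2" using x assms(2,3) unfolding T_def by auto
    ultimately show ?thesis by simp
  qed simp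
  finally show ?thesis .
qed

lemma card_le1_if_no_two:
  fixes T :: "nat set"
  assumes "finite T" "\<And>x y. x \<in> T \<Longrightarrow> y \<in> T \<Longrightarrow> x < y \<Longrightarrow> False"
  shows "card T \<le> 1"
proof -
  have "\<forall>x\<in>T. \<forall>y\<in>T. x = y" using assms(2) by (meson linorder_neqE_nat)
  then show ?thesis using assms(1) by (metis One_nat_def card_le_Suc0_iff_eq)
qed

lemma mod_eq_imp_dvd_diff: "(x::nat) \<le> y \<Longrightarrow> x mod q = y mod q \<Longrightarrow> q dvd (y - x)"
  using mod_eq_dvd_iff_nat[of x y q] by simp

lemma int_dvd_small_zero: "(q::int) dvd x \<Longrightarrow> \<bar>x\<bar> < q \<Longrightarrow> x = 0"
  using dvd_imp_le_int by force

lemma nat_mod_eq_iff_int_dvd: "(x::nat) mod q = y mod q \<longleftrightarrow> int q dvd int x - int y"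
  by (metis mod_eq_dvd_iff of_nat_eq_iff of_nat_mod)

lemma int_diff_by_blocks:
  "(x::nat) mod q = y mod q \<Longrightarrow> int x - int y = int q * (int (x div q) - int (y div q))"
proof -
  assume a: "x mod q = y mod q"
  have "int x = int q * int (x div q) + int (x mod q)" "int y = int q * int (y div q) + int (y mod q)"
    by (metis mult_div_mod_eq of_nat_add of_nat_mult)+
  then show ?thesis using a by (simp add: algebra_simps)
qed

lemma card_by_residue:
  fixes \<phi> :: "'a \<Rightarrow> nat"
  assumes "0 < q" "finite S"
  shows "card S = (\<Sum>c<q. card {f\<in>S. \<phi> f mod q = c})"
proof -
  have "S = (\<Union>c<q. {f\<in>S. \<phi> f mod q = c})" using assms(1) by auto
  then have "card S = card (\<Union>c<q. {f\<in>S. \<phi> f mod q = c})" by simp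
  also have "\<dots> = (\<Sum>c<q. card {f\<in>S. \<phi> f mod q = c})"
    by (rule card_UN_disjoint) (use assms(2) in auto)
  finally show ?thesis .
qed

text \<open>The margins created by the perturbation: with beta = lam/T and xi = lam - beta/8, the
  quantity beta N - xi is nonnegative when N < T active terms are present, negative when
  N \<ge> T, and xi > -1 so that it never overrides a kernel deficit of 1.\<close>
lemma perturbation_margins:
  fixes T N lam :: real
  assumes T: "T \<ge> 1" and l1: "-1 \<le> lam" and l0: "lam < 0" and N0: "0 \<le> N"
  shows "lam - (lam / T) / 8 > -1"
    and "N \<le> T - 1 \<Longrightarrow> (lam / T) * N - (lam - (lam / T) / 8) \<ge> 0"
    and "T \<le> N \<Longrightarrow> (lam / T) * N - (lam - (lam / T) / 8) < 0"
    and "(lam / T) * N \<le> 0"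
proof -
  define b where "b = lam / T"
  have Tp: "T > 0" using T by simp
  have bT: "b * T = lam" using Tp by (simp add: b_def)
  have bneg: "b < 0" using Tp l0 by (simp add: b_def divide_neg_pos)
  have "lam * T \<le> lam * 1" using T l0 by (intro mult_left_mono_neg) auto
  then have "lam \<le> b" using Tp by (simp add: b_def le_divide_eq)
  then show "lam - (lam / T) / 8 > -1" using bneg l1 unfolding b_def[symmetric] by linarith
  show "N \<le> T - 1 \<Longrightarrow> (lam / T) * N - (lam - (lam / T) / 8) \<ge> 0"
  proof -
    assume N: "N \<le> T - 1"
    have "b * (T - 1) \<le> b * N" using N bneg by (intro mult_left_mono_neg) auto
    moreover have "b * (T - 1) = lam - b" using bT by (simp add: right_diff_distrib)
    ultimately show ?thesis unfolding b_def[symmetric] using bneg by linarith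
  qed
  show "T \<le> N \<Longrightarrow> (lam / T) * N - (lam - (lam / T) / 8) < 0"
  proof -
    assume N: "T \<le> N"
    have "b * N \<le> b * T" using N bneg by (intro mult_left_mono_neg) auto
    then show ?thesis unfolding b_def[symmetric] using bT bneg by linarith
  qed
  show "(lam / T) * N \<le> 0" using bneg N0 unfolding b_def[symmetric] by (simp add: mult_nonpos_nonneg)
qed

section \<open>The weight profile of the kernel\<close>

text \<open>wt r l is the value of abar at l * p_i (independent of i): 2 on the first three quarters
  of 1..2r and -2 after, except that for odd r the last two weights are -1.\<close>
definition wt :: "nat \<Rightarrow> nat \<Rightarrow> real" where
  "wt r l = (if even r then (if l \<le> 3*r div 2 then 2 else -2)
     else (if l \<le> (3*r-1) div 2 then 2 else if l \<le> 2*r-2 then -2 else -1))"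

lemma wt_le2: "wt r l \<le> 2" by (simp add: wt_def)

lemma wt_psum_even:
  assumes "r = 2*s" "q \<le> 4*s"
  shows "(\<Sum>l=1..q. wt r l) = (if q \<le> 3*s then 2*real q else 12*real s - 2*real q)"
  using assms(2)
proof (induction q)
  case (Suc q)
  have "wt r (Suc q) = (if Suc q \<le> 3*s then 2 else -2)" using assms(1) by (simp add: wt_def)
  then show ?case using Suc by (auto simp: sum.cl_ivl_Suc split: if_splits)
qed simp

lemma wt_psum_odd:
  assumes "r = 2*s+1" "q \<le> 4*s+2" "s \<ge> 1"
  shows "(\<Sum>l=1..q. wt r l) = (if q \<le> 3*s+1 then 2*real q else if q \<le> 4*s then 12*real s + 4 - 2*real q
      else if q = 4*s+1 then 4*real s + 3 else 4*real s + 2)"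
  using assms(2)
proof (induction q)
  case (Suc q)
  have "(3*r - 1) div 2 = 3*s+1" "2*r-2 = 4*s" using assms(1) by auto
  then have "wt r (Suc q) = (if Suc q \<le> 3*s+1 then 2 else if Suc q \<le> 4*s then -2 else -1)"
    using assms(1) by (simp add: wt_def)
  then show ?case using Suc assms(3) by (auto simp: sum.cl_ivl_Suc split: if_splits)
qed simp

text \<open>The two properties of wt that the whole construction rests on: the full sum equals
  2r = thetabar, and every nonempty initial partial sum is at least 2.\<close>
lemma wt_psum:
  assumes "r \<ge> 2"
  shows wt_sum_full: "(\<Sum>l=1..2*r. wt r l) = 2*real r"
    and wt_psum_ge2: "1 \<le> q \<Longrightarrow> q \<le> 2*r \<Longrightarrow> (\<Sum>l=1..q. wt r l) \<ge> 2"
proof -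
  have "((\<Sum>l=1..2*r. wt r l) = 2*real r) \<and> (1 \<le> q \<longrightarrow> q \<le> 2*r \<longrightarrow> (\<Sum>l=1..q. wt r l) \<ge> 2)"
  proof (cases "even r")
    case True
    then obtain s where s: "r = 2*s" by blast
    show ?thesis using wt_psum_even[OF s, of "2*r"] wt_psum_even[OF s, of q] s by auto
  next
    case False
    then obtain s where s: "r = 2*s+1" by (metis oddE)
    then have "s \<ge> 1" using assms by simp
    show ?thesis using wt_psum_odd[OF s _ \<open>s\<ge>1\<close>, of "2*r"] wt_psum_odd[OF s _ \<open>s\<ge>1\<close>, of q] s by auto
  qed
  then show "(\<Sum>l=1..2*r. wt r l) = 2*real r" and "1 \<le> q \<Longrightarrow> q \<le> 2*r \<Longrightarrow> (\<Sum>l=1..q. wt r l) \<ge> 2"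
    by auto
qed

text \<open>Consequently a tail of the weights (all l > q for some q \<ge> 1) stays below the
  threshold 2r: a channel that has been cut off cannot fire.\<close>
lemma wt_tail_le:
  assumes "r \<ge> 2" "1 \<le> q"
  shows "(\<Sum>l=1..2*r. if q < l then wt r l else 0) \<le> 2*real r - 1"
proof (cases "q \<le> 2*r")
  case True
  have split: "(\<Sum>l=1..2*r. wt r l) = (\<Sum>l=1..2*r. if q < l then wt r l else 0)
      + (\<Sum>l=1..2*r. if l \<le> q then wt r l else 0)"
    by (subst sum.distrib[symmetric]) (rule sum.cong, auto)
  have "(\<Sum>l=1..2*r. if l \<le> q then wt r l else 0) = (\<Sum>l\<in>{l\<in>{1..2*r}. l \<le> q}. wt r l)"
    using sum.inter_filter[of "{1..2*r}" "wt r" "\<lambda>l. l \<le> q"] by simp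
  also have "{l\<in>{1..2*r}. l \<le> q} = {1..q}" using True by auto
  finally show ?thesis using split wt_sum_full[OF assms(1)] wt_psum_ge2[OF assms True] by linarith
next
  case False
  then have "(\<Sum>l=1..2*r. if q < l then wt r l else 0) = 0" by (intro sum.neutral) auto
  then show ?thesis using assms by simp
qed

section \<open>The primes between 2m and 3m and the kernel\<close>

locale prime_window =
  fixes m :: nat
  assumes m_pos: "m > 0" and r2: "rho m \<ge> 2"
begin

abbreviation "r \<equiv> rho m"
abbreviation "k \<equiv> kk m"
abbreviation "p \<equiv> pr m"
abbreviation "h \<equiv> hh m"

lemma r_pos: "r > 0" using r2 by simp

lemma finite_prime_set: "finite (prime_set m)"
  by (rule finite_subset[of _ "{..<3*m}"]) (auto simp: prime_set_def)

lemma length_prime_list: "length (rev (sorted_list_of_set (prime_set m))) = r"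
  by (simp add: rho_def finite_prime_set)

lemma p_in: "i < r \<Longrightarrow> p i \<in> prime_set m"
proof -
  assume "i < r"
  then have "rev (sorted_list_of_set (prime_set m)) ! i \<in> set (rev (sorted_list_of_set (prime_set m)))"
    using length_prime_list by (intro nth_mem) simp
  then show ?thesis by (simp add: pr_def finite_prime_set)
qed

lemma p_prime: "i < r \<Longrightarrow> prime (p i)" using p_in by (simp add: prime_set_def)
lemma p_gt: "i < r \<Longrightarrow> 2*m < p i" using p_in by (simp add: prime_set_def)
lemma p_lt: "i < r \<Longrightarrow> p i < 3*m" using p_in by (simp add: prime_set_def)
lemma p_pos: "i < r \<Longrightarrow> 0 < p i" using p_prime prime_gt_0_nat by blast

lemma p_inj: "i < r \<Longrightarrow> j < r \<Longrightarrow> p i = p j \<Longrightarrow> i = j"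
  using nth_eq_iff_index_eq[of "rev (sorted_list_of_set (prime_set m))" i j] length_prime_list
  by (simp add: pr_def)

text \<open>The primes of the window are odd numbers in (2m, 3m), so there are at most m/2 of them.\<close>
lemma r_le: "2 * r \<le> m"
proof -
  have "prime_set m \<subseteq> (\<lambda>j. 2*j+1) ` {m..<3*m div 2}"
  proof
    fix q assume q: "q \<in> prime_set m"
    then have "prime q" "2*m < q" "q < 3*m" by (auto simp: prime_set_def)
    then have "odd q" using m_pos by (intro prime_odd_nat) auto
    then have "q = 2*(q div 2)+1" by presburger
    moreover have "q div 2 \<in> {m..<3*m div 2}" using \<open>2*m<q\<close> \<open>q<3*m\<close> \<open>odd q\<close> by auto presburger+
    ultimately show "q \<in> (\<lambda>j. 2*j+1) ` {m..<3*m div 2}" by blast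
  qed
  then have "r \<le> card ((\<lambda>j. 2*j+1) ` {m..<3*m div 2})"
    unfolding rho_def by (intro card_mono) auto
  also have "\<dots> \<le> card {m..<3*m div 2}" by (rule card_image_le) simp
  also have "\<dots> = 3*m div 2 - m" by simp
  finally show ?thesis by linarith
qed

lemma two_r_lt_p: "i < r \<Longrightarrow> 2*r < p i" using p_gt r_le by fastforce

lemma support_lt_k: "i < r \<Longrightarrow> l \<le> 2*r \<Longrightarrow> l * p i + 1 \<le> k"
proof -
  assume a: "i < r" "l \<le> 2*r"
  have "l * p i \<le> 2*r*(3*m-1)" using p_lt[OF a(1)] a(2) by (intro mult_le_mono) auto
  also have "\<dots> + 1 \<le> (6*m-1)*r"
  proof -
    obtain m' where "m = Suc m'" using m_pos not0_implies_Suc by blast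
    then show ?thesis using r2 by (simp add: algebra_simps)
  qed
  finally show ?thesis by (simp add: kk_def)
qed

lemma k_ge: "k \<ge> 2" using support_lt_k[of 0 1] r2 p_gt[of 0] by auto

text \<open>The product of two distinct primes of the window exceeds k; this is what makes two
  distinct channels independent within one window of length k.\<close>
lemma k_lt_pp: "i < r \<Longrightarrow> j < r \<Longrightarrow> i \<noteq> j \<Longrightarrow> k < p i * p j"
proof -
  assume a: "i < r" "j < r" "i \<noteq> j"
  have "k \<le> 6*m*r" by (simp add: kk_def)
  also have "\<dots> \<le> 3*m*m" using r_le by simp
  also have "\<dots> < (2*m+1)*(2*m+1)" by (simp add: algebra_simps)
  also have "\<dots> \<le> p i * p j" using p_gt[OF a(1)] p_gt[OF a(2)] by (intro mult_le_mono) auto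
  finally show ?thesis .
qed

lemma p_ndvd_p: "i < r \<Longrightarrow> i' < r \<Longrightarrow> i \<noteq> i' \<Longrightarrow> \<not> p i dvd p i'"
  using primes_dvd_imp_eq[OF p_prime p_prime] p_inj by blast

lemma p_ndvd_small: "i < r \<Longrightarrow> 0 < l \<Longrightarrow> l \<le> 2*r \<Longrightarrow> \<not> p i dvd l"
  using two_r_lt_p[of i] dvd_imp_le[of "p i" l] by linarith

lemma support_unique:
  assumes "i < r" "i' < r" "1 \<le> l" "l \<le> 2*r" "1 \<le> l'" "l' \<le> 2*r" "l * p i = l' * p i'"
  shows "i = i' \<and> l = l'"
proof -
  have "p i dvd l' * p i'" using assms(7) by (metis dvd_triv_right)
  then have "p i dvd l' \<or> p i dvd p i'" using p_prime[OF assms(1)] prime_dvd_mult_iff by blast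
  then have "p i dvd p i'" using p_ndvd_small[OF assms(1), of l'] assms(5,6) by auto
  then have "i = i'" using p_ndvd_p assms(1,2) by blast
  moreover have "l = l'" using assms(7) \<open>i = i'\<close> p_pos[OF assms(1)] by simp
  ultimately show ?thesis by blast
qed

lemma support_ex_iff:
  assumes "i < r" "1 \<le> l" "l \<le> 2*r" "\<And>l'. C l' \<Longrightarrow> 1 \<le> l' \<and> l' \<le> 2*r"
  shows "(\<exists>i'<r. \<exists>l'. C l' \<and> l * p i = l' * p i') \<longleftrightarrow> C l"
proof
  assume "\<exists>i'<r. \<exists>l'. C l' \<and> l * p i = l' * p i'"
  then obtain i' l' where "i' < r" "C l'" "l * p i = l' * p i'" by blast
  then show "C l" using support_unique[OF assms(1) _ assms(2,3)] assms(4) by metis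
qed (use assms(1) in blast)

lemma support_bounds:
  "3*r div 2 \<le> 2*r" "(3*r-1) div 2 \<le> 2*r" "1 \<le> (3*r+1) div 2" "1 \<le> 2*r-1"
  using r2 by auto

lemma abar_support:
  assumes "i < r" "1 \<le> l" "l \<le> 2*r"
  shows "abar m (l * p i) = wt r l"
proof -
  note ex = support_ex_iff[OF assms]
  have c1: "(\<exists>i'<r. \<exists>l'. 1 \<le> l' \<and> l' \<le> 3*r div 2 \<and> l * p i = l' * p i') \<longleftrightarrow> 1 \<le> l \<and> l \<le> 3*r div 2"
    by (rule ex[of "\<lambda>l'. 1 \<le> l' \<and> l' \<le> 3*r div 2", unfolded conj_assoc]) (use support_bounds in auto)
  have c2: "(\<exists>i'<r. \<exists>l'. 3*r div 2 < l' \<and> l' \<le> 2*r \<and> l * p i = l' * p i') \<longleftrightarrow> 3*r div 2 < l \<and> l \<le> 2*r"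
    by (rule ex[of "\<lambda>l'. 3*r div 2 < l' \<and> l' \<le> 2*r", unfolded conj_assoc]) auto
  have c3: "(\<exists>i'<r. \<exists>l'. 1 \<le> l' \<and> l' \<le> (3*r-1) div 2 \<and> l * p i = l' * p i')
      \<longleftrightarrow> 1 \<le> l \<and> l \<le> (3*r-1) div 2"
    by (rule ex[of "\<lambda>l'. 1 \<le> l' \<and> l' \<le> (3*r-1) div 2", unfolded conj_assoc]) (use support_bounds in auto)
  have c4: "(\<exists>i'<r. \<exists>l'. (3*r+1) div 2 \<le> l' \<and> l' \<le> 2*r-2 \<and> l * p i = l' * p i')
      \<longleftrightarrow> (3*r+1) div 2 \<le> l \<and> l \<le> 2*r-2"
    by (rule ex[of "\<lambda>l'. (3*r+1) div 2 \<le> l' \<and> l' \<le> 2*r-2", unfolded conj_assoc]) (use support_bounds in auto)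
  have c5: "(\<exists>i'<r. \<exists>l'. (l' = 2*r-1 \<or> l' = 2*r) \<and> l * p i = l' * p i') \<longleftrightarrow> (l = 2*r-1 \<or> l = 2*r)"
    by (rule ex[of "\<lambda>l'. l' = 2*r-1 \<or> l' = 2*r"]) (use support_bounds in auto)
  have "odd r \<Longrightarrow> (3*r+1) div 2 = (3*r-1) div 2 + 1" using r2 by presburger
  then show ?thesis
    unfolding abar_def Let_def wt_def c1 c2 c3 c4 c5 using assms by auto
qed

lemma abar_off_support:
  assumes "\<forall>i<r. \<forall>l. 1 \<le> l \<and> l \<le> 2*r \<longrightarrow> j \<noteq> l * p i"
  shows "abar m j = 0"
proof -
  have none: "\<not> (\<exists>i<r. \<exists>l. C l \<and> j = l * p i)" if "\<And>l. C l \<Longrightarrow> 1 \<le> l \<and> l \<le> 2*r" for C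
    using assms that by blast
  have n1: "\<not> (\<exists>i<r. \<exists>l. 1 \<le> l \<and> l \<le> 3*r div 2 \<and> j = l * p i)"
    by (rule none[of "\<lambda>l. 1 \<le> l \<and> l \<le> 3*r div 2", unfolded conj_assoc]) (use support_bounds in auto)
  have n2: "\<not> (\<exists>i<r. \<exists>l. 3*r div 2 < l \<and> l \<le> 2*r \<and> j = l * p i)"
    by (rule none[of "\<lambda>l. 3*r div 2 < l \<and> l \<le> 2*r", unfolded conj_assoc]) auto
  have n3: "\<not> (\<exists>i<r. \<exists>l. 1 \<le> l \<and> l \<le> (3*r-1) div 2 \<and> j = l * p i)"
    by (rule none[of "\<lambda>l. 1 \<le> l \<and> l \<le> (3*r-1) div 2", unfolded conj_assoc]) (use support_bounds in auto)
  have n4: "\<not> (\<exists>i<r. \<exists>l. (3*r+1) div 2 \<le> l \<and> l \<le> 2*r-2 \<and> j = l * p i)"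
    by (rule none[of "\<lambda>l. (3*r+1) div 2 \<le> l \<and> l \<le> 2*r-2", unfolded conj_assoc]) (use support_bounds in auto)
  have n5: "\<not> (\<exists>i<r. \<exists>l. (l = 2*r-1 \<or> l = 2*r) \<and> j = l * p i)"
    by (rule none[of "\<lambda>l. l = 2*r-1 \<or> l = 2*r"]) (use support_bounds in auto)
  show ?thesis unfolding abar_def Let_def by (simp only: n1 n2 n3 n4 n5 if_False) simp
qed

lemma sum_abar:
  "(\<Sum>j = 1..k. abar m j * \<phi> j) = (\<Sum>i<r. \<Sum>l = 1..2*r. wt r l * \<phi> (l * p i))"
proof -
  define S where "S = {..<r} \<times> {1..2*r}"
  define \<iota> where "\<iota> = (\<lambda>(i,l). l * p i)"
  have inj: "inj_on \<iota> S" unfolding inj_on_def S_def \<iota>_def using support_unique by auto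
  have sub: "\<iota> ` S \<subseteq> {1..k}"
  proof
    fix x assume "x \<in> \<iota> ` S"
    then obtain i l where "i < r" "1 \<le> l" "l \<le> 2*r" "x = l * p i" unfolding S_def \<iota>_def by auto
    then show "x \<in> {1..k}" using support_lt_k[of i l] p_pos[of i] by auto
  qed
  have "(\<Sum>i<r. \<Sum>l = 1..2*r. wt r l * \<phi> (l * p i)) = (\<Sum>x\<in>S. wt r (snd x) * \<phi> (\<iota> x))"
    unfolding S_def \<iota>_def by (simp add: sum.cartesian_product case_prod_beta)
  also have "\<dots> = (\<Sum>x\<in>S. abar m (\<iota> x) * \<phi> (\<iota> x))"
    by (rule sum.cong) (auto simp: S_def \<iota>_def abar_support)
  also have "\<dots> = (\<Sum>j\<in>\<iota> ` S. abar m j * \<phi> j)"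
    using sum.reindex[OF inj, of "\<lambda>j. abar m j * \<phi> j"] by simp
  also have "\<dots> = (\<Sum>j = 1..k. abar m j * \<phi> j)"
  proof (rule sum.mono_neutral_left[OF _ sub])
    show "\<forall>j\<in>{1..k} - \<iota> ` S. abar m j * \<phi> j = 0"
    proof
      fix j assume j: "j \<in> {1..k} - \<iota> ` S"
      have "\<forall>i<r. \<forall>l. 1 \<le> l \<and> l \<le> 2*r \<longrightarrow> j \<noteq> l * p i"
        using j unfolding S_def \<iota>_def by force
      then show "abar m j * \<phi> j = 0" using abar_off_support by simp
    qed
  qed simp
  finally show ?thesis by simp
qed

lemma sum_bb:
  "(\<Sum>f = 1..h. bb m f * \<phi> f) = (\<Sum>j = 1..k. abar m j * \<phi> (r * j))"
proof -
  have inj: "inj_on (\<lambda>j. r*j) {1..k}" using r_pos by (auto simp: inj_on_def)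
  have sub: "(\<lambda>j. r*j) ` {1..k} \<subseteq> {1..h}" using r_pos by (auto simp: hh_def)
  have "(\<Sum>j = 1..k. abar m j * \<phi> (r * j)) = (\<Sum>j = 1..k. bb m (r*j) * \<phi> (r * j))"
    by (rule sum.cong) (use r_pos in \<open>auto simp: bb_def\<close>)
  also have "\<dots> = (\<Sum>f\<in>(\<lambda>j. r*j) ` {1..k}. bb m f * \<phi> f)"
    using sum.reindex[OF inj, of "\<lambda>f. bb m f * \<phi> f"] by simp
  also have "\<dots> = (\<Sum>f = 1..h. bb m f * \<phi> f)"
    by (rule sum.mono_neutral_left[OF _ sub]) (auto simp: bb_def)
  finally show ?thesis by simp
qed

section \<open>The kernel sum of a single channel\<close>

definition conv :: "(nat \<Rightarrow> real) \<Rightarrow> nat \<Rightarrow> real" where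
  "conv \<psi> j = (\<Sum>i'<r. \<Sum>l=1..2*r. wt r l * \<psi> (j - l * p i'))"

lemma conv_split:
  assumes "i < r"
  shows "conv \<psi> j = (\<Sum>l=1..2*r. wt r l * \<psi> (j - l * p i))
    + (\<Sum>i'\<in>{..<r}-{i}. \<Sum>l=1..2*r. wt r l * \<psi> (j - l * p i'))"
  unfolding conv_def using assms by (simp add: sum.remove)

lemma own_mod:
  assumes "i < r" "l \<le> 2*r" "k \<le> j"
  shows "(j - l * p i + a) mod p i = (j + a) mod p i"
proof -
  have "l * p i \<le> j" using support_lt_k[OF assms(1,2)] assms(3) by auto
  then have "j + a = (j - l * p i + a) + l * p i" by simp
  then show ?thesis by (metis mod_mult_self1 mult.commute)
qed

lemma foreign_shift_ndvd:
  assumes "i < r" "i' < r" "i \<noteq> i'" "0 < l" "l \<le> 2*r"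
  shows "\<not> p i dvd l * p i'"
proof
  assume "p i dvd l * p i'"
  then have "p i dvd l \<or> p i dvd p i'" using p_prime[OF assms(1)] prime_dvd_mult_iff by blast
  then show False using p_ndvd_p[OF assms(1-3)] p_ndvd_small[OF assms(1,4,5)] by blast
qed

lemma cross_card:
  assumes "i < r" "i' < r" "i \<noteq> i'" "k \<le> j"
  shows "card {l\<in>{1..2*r}. (j - l * p i' + a) mod p i = c} \<le> 1"
proof (rule card_le1_if_no_two)
  fix l1 l2 assume l: "l1 \<in> {l\<in>{1..2*r}. (j - l * p i' + a) mod p i = c}"
    "l2 \<in> {l\<in>{1..2*r}. (j - l * p i' + a) mod p i = c}" "l1 < l2"
  have le: "l2 * p i' \<le> j" using support_lt_k[OF assms(2)] l(2) assms(4) by fastforce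
  have ll: "l1 * p i' \<le> l2 * p i'" using l(3) by simp
  have "(l2 - l1) * p i' = l2 * p i' - l1 * p i'" by (simp add: diff_mult_distrib)
  then have eq: "j - l1 * p i' + a = (j - l2 * p i' + a) + (l2 - l1) * p i'"
    using le ll by linarith
  have m: "(j - l2 * p i' + a) mod p i = (j - l1 * p i' + a) mod p i" using l(1,2) by simp
  have "(j - l1 * p i' + a) - (j - l2 * p i' + a) = (l2 - l1) * p i'" using eq by linarith
  moreover have "p i dvd (j - l1 * p i' + a) - (j - l2 * p i' + a)"
    using eq m by (intro mod_eq_imp_dvd_diff) linarith+
  ultimately have "p i dvd (l2 - l1) * p i'" by simp
  moreover have "0 < l2 - l1" "l2 - l1 \<le> 2*r" using l by auto
  ultimately show False using foreign_shift_ndvd[OF assms(1-3)] by blast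
qed simp

lemma cross_zero:
  assumes "i < r" "i' < r" "i \<noteq> i'" "k \<le> j" "(j + a) mod p i = k mod p i" "l \<in> {1..2*r}"
  shows "(j - l * p i' + a) mod p i \<noteq> k mod p i"
proof
  assume a: "(j - l * p i' + a) mod p i = k mod p i"
  have le: "l * p i' \<le> j" using support_lt_k[OF assms(2), of l] assms by auto
  have eq: "j + a = (j - l * p i' + a) + l * p i'" using le by simp
  have "(j + a) - (j - l * p i' + a) = l * p i'" using eq by linarith
  moreover have "p i dvd (j + a) - (j - l * p i' + a)"
    using eq a assms(5) by (intro mod_eq_imp_dvd_diff) linarith+
  ultimately have "p i dvd l * p i'" by simp
  then show False using foreign_shift_ndvd[OF assms(1-3), of l] assms(6) by auto
qed

lemma foreign_sum_zero:
  assumes "i < r" "k \<le> j" "(j + a) mod p i = k mod p i"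
    "\<And>s. \<psi> s \<noteq> 0 \<Longrightarrow> (s + a) mod p i = k mod p i"
  shows "(\<Sum>i'\<in>{..<r}-{i}. \<Sum>l=1..2*r. wt r l * \<psi> (j - l * p i')) = 0"
proof (intro sum.neutral ballI)
  fix i' l assume i': "i' \<in> {..<r}-{i}" and l: "l \<in> {1..2*r}"
  have "(j - l * p i' + a) mod p i \<noteq> k mod p i" using cross_zero[OF assms(1) _ _ assms(2,3) l] i' by auto
  then show "wt r l * \<psi> (j - l * p i') = 0" using assms(4)[of "j - l * p i'"] by auto
qed

lemma foreign_sum_le:
  assumes "i < r" "k \<le> j" "\<And>s. \<psi> s = 0 \<or> \<psi> s = 1"
    "\<And>s. \<psi> s \<noteq> 0 \<Longrightarrow> (s + a) mod p i = k mod p i"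
  shows "(\<Sum>i'\<in>{..<r}-{i}. \<Sum>l=1..2*r. wt r l * \<psi> (j - l * p i')) \<le> 2 * real r - 2"
proof -
  have each: "(\<Sum>l=1..2*r. wt r l * \<psi> (j - l * p i')) \<le> 2" if i': "i' \<in> {..<r}-{i}" for i'
  proof (rule sum_single_support_le)
    have "{l\<in>{1..2*r}. \<psi> (j - l * p i') \<noteq> 0} \<subseteq> {l\<in>{1..2*r}. (j - l * p i' + a) mod p i = k mod p i}"
      using assms(4) by auto
    then have "card {l\<in>{1..2*r}. \<psi> (j - l * p i') \<noteq> 0}
        \<le> card {l\<in>{1..2*r}. (j - l * p i' + a) mod p i = k mod p i}"
      by (intro card_mono) auto
    also have "\<dots> \<le> 1" using cross_card[OF assms(1), of i' j a] i' assms(2) by simp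
    finally show "card {l\<in>{1..2*r}. \<psi> (j - l * p i') \<noteq> 0} \<le> 1" .
  qed (use assms(3) wt_le2 in auto)
  have "(\<Sum>i'\<in>{..<r}-{i}. \<Sum>l=1..2*r. wt r l * \<psi> (j - l * p i')) \<le> of_nat (card ({..<r}-{i})) * 2"
    by (intro sum_bounded_above each)
  also have "card ({..<r}-{i}) = r - 1" using assms(1) by simp
  finally show ?thesis using r2 by (simp add: of_nat_diff)
qed

lemma conv_periodic:
  assumes "i < r" "\<And>s. \<psi> s = (if (s + a) mod p i = k mod p i then 1 else 0)" "k \<le> j"
  shows "(j + a) mod p i = k mod p i \<Longrightarrow> conv \<psi> j = 2 * real r"
    and "(j + a) mod p i \<noteq> k mod p i \<Longrightarrow> conv \<psi> j \<le> 2 * real r - 2"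
proof -
  have "(\<Sum>l=1..2*r. wt r l * \<psi> (j - l * p i))
      = (\<Sum>l=1..2*r. wt r l * (if (j + a) mod p i = k mod p i then 1 else 0))"
    using own_mod[OF assms(1) _ assms(3)] assms(2) by (intro sum.cong) auto
  also have "\<dots> = (if (j + a) mod p i = k mod p i then 2 * real r else 0)"
    using wt_sum_full[OF r2] by (simp add: sum_distrib_right[symmetric])
  finally have own: "(\<Sum>l=1..2*r. wt r l * \<psi> (j - l * p i))
      = (if (j + a) mod p i = k mod p i then 2 * real r else 0)" .
  show "conv \<psi> j = 2 * real r" if "(j + a) mod p i = k mod p i"
  proof -
    have "(\<Sum>i'\<in>{..<r}-{i}. \<Sum>l=1..2*r. wt r l * \<psi> (j - l * p i')) = 0"
      by (rule foreign_sum_zero[OF assms(1,3) that]) (use assms(2) in \<open>auto split: if_splits\<close>)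
    then show ?thesis using conv_split[OF assms(1)] own that by simp
  qed
  show "conv \<psi> j \<le> 2 * real r - 2" if "(j + a) mod p i \<noteq> k mod p i"
  proof -
    have "(\<Sum>i'\<in>{..<r}-{i}. \<Sum>l=1..2*r. wt r l * \<psi> (j - l * p i')) \<le> 2 * real r - 2"
      by (rule foreign_sum_le[OF assms(1,3)]) (use assms(2) in \<open>auto split: if_splits\<close>)
    then show ?thesis using conv_split[OF assms(1)] own that by simp
  qed
qed

lemma conv_truncated_early:
  assumes "\<And>s. \<psi> s = (if (s + a) mod p i = k mod p i \<and> s \<le> K then 1 else 0)"
    "\<And>s. \<psi>' s = (if (s + a) mod p i = k mod p i then 1 else 0)" "j \<le> K + 1"
  shows "conv \<psi> j = conv \<psi>' j"
  unfolding conv_def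
proof (intro sum.cong refl)
  fix i' l assume i': "i' \<in> {..<r}" and l: "l \<in> {1..2*r}"
  have "1 \<le> l * p i'" using l p_pos[of i'] i' by (simp add: Suc_le_eq)
  then have "j - l * p i' \<le> K" using assms(3) by linarith
  then show "wt r l * \<psi> (j - l * p i') = wt r l * \<psi>' (j - l * p i')" using assms(1,2) by simp
qed

text \<open>A channel cut off after time K although it should fire at K + 1: at a later firing time
  j its own sub-kernel only sees the weights wt l with l p_i > j - K - 1, a proper tail, so it
  contributes at most 2r - 1.\<close>
lemma own_sum_truncated:
  assumes "i < r" "\<And>s. \<psi> s = (if (s + a) mod p i = k mod p i \<and> s \<le> K then 1 else 0)" "k \<le> j"
    "(K + 1 + a) mod p i = k mod p i" "K + 2 \<le> j" "(j + a) mod p i = k mod p i"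
  shows "(\<Sum>l=1..2*r. wt r l * \<psi> (j - l * p i)) \<le> 2 * real r - 1"
proof -
  have "p i dvd (j + a) - (K + 1 + a)"
    using assms(4,5,6) by (intro mod_eq_imp_dvd_diff) auto
  then have "p i dvd j - K - 1" by simp
  then obtain q where q: "j - K - 1 = q * p i" by (metis dvdE mult.commute)
  have q1: "1 \<le> q" using q assms(5) by (cases q) auto
  have "(\<Sum>l=1..2*r. wt r l * \<psi> (j - l * p i)) = (\<Sum>l=1..2*r. if q < l then wt r l else 0)"
  proof (rule sum.cong[OF refl])
    fix l assume l: "l \<in> {1..2*r}"
    have le: "l * p i \<le> j" using support_lt_k[OF assms(1)] l assms(3) by fastforce
    have "j - l * p i \<le> K \<longleftrightarrow> q * p i < l * p i" using q le assms(5) by linarith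
    also have "\<dots> \<longleftrightarrow> q < l" using p_pos[OF assms(1)] by simp
    finally show "wt r l * \<psi> (j - l * p i) = (if q < l then wt r l else 0)"
      using assms(2)[of "j - l * p i"] own_mod[OF assms(1) _ assms(3)] l assms(6) by simp
  qed
  then show ?thesis using wt_tail_le[OF r2 q1] by simp
qed

lemma conv_truncated_late:
  assumes "i < r" "\<And>s. \<psi> s = (if (s + a) mod p i = k mod p i \<and> s \<le> K then 1 else 0)" "k \<le> j"
    "(K + 1 + a) mod p i = k mod p i" "K + 2 \<le> j"
  shows "conv \<psi> j \<le> 2 * real r - 1"
proof (cases "(j + a) mod p i = k mod p i")
  case True
  have "(\<Sum>i'\<in>{..<r}-{i}. \<Sum>l=1..2*r. wt r l * \<psi> (j - l * p i')) = 0"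
    by (rule foreign_sum_zero[OF assms(1,3) True]) (use assms(2) in \<open>auto split: if_splits\<close>)
  then show ?thesis using conv_split[OF assms(1)] own_sum_truncated[OF assms True] by simp
next
  case False
  have "(\<Sum>l=1..2*r. wt r l * \<psi> (j - l * p i)) = 0"
    using own_mod[OF assms(1) _ assms(3)] assms(2) False by (intro sum.neutral) auto
  moreover have "(\<Sum>i'\<in>{..<r}-{i}. \<Sum>l=1..2*r. wt r l * \<psi> (j - l * p i')) \<le> 2 * real r - 2"
    by (rule foreign_sum_le[OF assms(1,3)]) (use assms(2) in \<open>auto split: if_splits\<close>)
  ultimately show ?thesis using conv_split[OF assms(1)] by simp
qed

section \<open>Closed forms of x and y\<close>

definition xcf :: "nat \<Rightarrow> nat \<Rightarrow> real" where
  "xcf i t = (if t mod p i = k mod p i then 1 else 0)"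

lemma xcf_k: "xcf i k = 1" by (simp add: xcf_def)

lemma step_threshold:
  "c = 2 * real r \<Longrightarrow> step (c - thetabar m) = 1"
  "c \<le> 2 * real r - 1 \<Longrightarrow> step (c - thetabar m) = 0"
  by (auto simp: thetabar_def step_def)

lemma step_conv_periodic:
  assumes "i < r" "\<And>s. \<psi> s = (if (s + a) mod p i = k mod p i then 1 else 0)" "k \<le> j"
  shows "step (conv \<psi> j - thetabar m) = (if (j + a) mod p i = k mod p i then 1 else 0)"
  using conv_periodic[OF assms] step_threshold by (cases "(j + a) mod p i = k mod p i") auto

lemma xs_closed_form: assumes "i < r" shows "xs m i t = xcf i t"
  unfolding xs_def
proof (rule thr_seq_eq)
  fix t assume t: "t < k"
  have b: "beta m i = k mod p i"
    unfolding beta_def mu_def using minus_div_mult_eq_mod[of k "p i"] by (simp add: mult.commute)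
  have "(\<exists>l. l < mu m i \<and> t = beta m i + l * p i) \<longleftrightarrow> t mod p i = k mod p i"
  proof
    assume "\<exists>l. l < mu m i \<and> t = beta m i + l * p i"
    then show "t mod p i = k mod p i" using b by auto
  next
    assume e: "t mod p i = k mod p i"
    have tt: "t = t div p i * p i + k mod p i" using e by (metis div_mult_mod_eq)
    have "t div p i < mu m i"
    proof (rule ccontr)
      assume "\<not> t div p i < mu m i"
      then have "k div p i * p i \<le> t div p i * p i" unfolding mu_def by (intro mult_le_mono1) simp
      then have "k \<le> t" using tt by (metis add_le_mono1 div_mult_mod_eq)
      then show False using t by simp
    qed
    then show "\<exists>l. l < mu m i \<and> t = beta m i + l * p i" using tt b by (intro exI[of _ "t div p i"]) simp
  qed
  then show "(if \<exists>l. l < mu m i \<and> t = beta m i + l * p i then 1 else 0) = xcf i t"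
    by (simp add: xcf_def)
next
  fix t assume t: "k \<le> t"
  have sum: "(\<Sum>j = 1..k. abar m j * xcf i (t - j)) = conv (xcf i) t"
    unfolding sum_abar conv_def by simp
  have per: "\<And>s. xcf i s = (if (s + 0) mod p i = k mod p i then 1 else 0)" by (simp add: xcf_def)
  show "step ((\<Sum>j = 1..k. abar m j * xcf i (t - j)) - thetabar m) = xcf i t"
    unfolding sum step_conv_periodic[OF assms per t] by (simp add: xcf_def)
qed

lemma interleaved_sum:
  assumes "h \<le> n"
  shows "(\<Sum>f = 1..h. bb m f * G (n - f)) = conv (\<lambda>s. G (r*s + n mod r)) (n div r)"
proof -
  have kn: "k \<le> n div r" using assms r_pos by (simp add: hh_def less_eq_div_iff_mult_less_eq mult.commute)
  have "(\<Sum>f = 1..h. bb m f * G (n - f)) = (\<Sum>i<r. \<Sum>l = 1..2*r. wt r l * G (n - r * (l * p i)))"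
    unfolding sum_bb sum_abar by simp
  also have "\<dots> = conv (\<lambda>s. G (r*s + n mod r)) (n div r)"
    unfolding conv_def
  proof (intro sum.cong refl)
    fix i l assume i: "i \<in> {..<r}" and l: "l \<in> {1..2*r}"
    have "r * (l * p i) \<le> r * (n div r)" using support_lt_k[of i l] i l kn by auto
    moreover have "r * (n div r - l * p i) = r * (n div r) - r * (l * p i)" by (simp add: diff_mult_distrib2)
    moreover have "n = r * (n div r) + n mod r" by simp
    ultimately have "n - r * (l * p i) = r * (n div r - l * p i) + n mod r" by linarith
    then show "wt r l * G (n - r * (l * p i)) = wt r l * G (r * (n div r - l * p i) + n mod r)" by simp
  qed
  finally show ?thesis .
qed

lemma kernel_block_ge_k: "h \<le> n \<Longrightarrow> k \<le> n div r"
  using r_pos by (simp add: hh_def less_eq_div_iff_mult_less_eq mult.commute)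

lemma below_h_block_lt_k: "n < h \<Longrightarrow> n div r < k"
  using r_pos by (simp add: hh_def less_mult_imp_div_less mult.commute)

definition ycf :: "nat \<Rightarrow> real" where "ycf n = xcf (n mod r) (1 + n div r)"

lemma ys_closed_form: "ys m n = ycf n"
  unfolding ys_def
proof (rule thr_seq_eq)
  fix n show "xs m (n mod r) (1 + n div r) = ycf n" using xs_closed_form r_pos by (simp add: ycf_def)
next
  fix n assume n: "h \<le> n"
  have i: "n mod r < r" using r_pos by simp
  have per: "\<And>s. ycf (r*s + n mod r) = (if (s + 1) mod p (n mod r) = k mod p (n mod r) then 1 else 0)"
    using i by (simp add: ycf_def xcf_def add.commute)
  show "step ((\<Sum>f = 1..h. bb m f * ycf (n - f)) - thetabar m) = ycf n"
    unfolding interleaved_sum[OF n] step_conv_periodic[OF i per kernel_block_ge_k[OF n]]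
    by (simp add: ycf_def xcf_def add.commute)
qed

end

section \<open>Cutting off the first d + 1 channels\<close>

locale cutoff = prime_window +
  fixes d :: nat
  assumes d_lt: "d < rho m"
begin

abbreviation "L \<equiv> Lcm (pr m ` {0..d})"

lemma L1_eq: "L1 m d = r * L" by (simp add: L1_def)

lemma L_pos: "L > 0"
proof -
  have "0 \<notin> pr m ` {0..d}"
  proof
    assume "0 \<in> pr m ` {0..d}"
    then obtain i where "i \<le> d" "p i = 0" by auto
    then show False using d_lt p_pos[of i] by simp
  qed
  then show ?thesis using Lcm_0_iff_nat[of "pr m ` {0..d}"] by (simp add: Nat.neq0_conv[symmetric] del: Nat.neq0_conv)
qed

lemma dvd_L: "i \<le> d \<Longrightarrow> p i dvd L" by (rule dvd_Lcm) simp

lemma xcf_periodic_L: "i \<le> d \<Longrightarrow> xcf i (t + L) = xcf i t"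
proof -
  assume "i \<le> d"
  then obtain c where "L = p i * c" using dvd_L by blast
  then show ?thesis by (simp add: xcf_def)
qed

definition wcf :: "nat \<Rightarrow> real" where
  "wcf n = (if n mod r \<le> d then (if n div r \<le> k - 2 then xcf (n mod r) (1 + n div r) else 0)
           else xcf (n mod r) (1 + n div r + L))"

lemma ws_closed_form: "ws m d n = wcf n"
  unfolding ws_def
proof (rule thr_seq_eq)
  fix n assume n: "n < h"
  have i: "n mod r < r" using r_pos by simp
  have j: "n div r \<le> k - 1" using below_h_block_lt_k[OF n] by linarith
  have dv: "(n + r * L) div r = n div r + L" "(n + r*L) mod r = n mod r" using r_pos by simp_all
  show "(let i = n mod r; j = n div r in if i \<le> d then if j \<le> k - 2 then xs m i (1 + j) else 1 - xs m i k
          else ys m (n + L1 m d)) = wcf n"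
    unfolding Let_def wcf_def L1_eq ys_closed_form ycf_def dv using xs_closed_form[OF i] xcf_k j
    by (auto simp: add.commute add.left_commute)
next
  fix n assume n: "h \<le> n"
  note kn = kernel_block_ge_k[OF n]
  have i: "n mod r < r" using r_pos by simp
  show "step ((\<Sum>f = 1..h. bb m f * wcf (n - f)) - thetabar m) = wcf n"
    unfolding interleaved_sum[OF n]
  proof (cases "n mod r \<le> d")
    case True
    have cut: "\<And>s. wcf (r*s + n mod r)
        = (if (s + 1) mod p (n mod r) = k mod p (n mod r) \<and> s \<le> k - 2 then 1 else 0)"
      using True i by (simp add: wcf_def xcf_def add.commute)
    have "k - 2 + 1 + 1 = k" using k_ge by linarith
    then have "(k - 2 + 1 + 1) mod p (n mod r) = k mod p (n mod r)" "k - 2 + 2 \<le> n div r" using kn by simp_all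
    moreover have "wcf n = 0" using True kn k_ge by (simp add: wcf_def)
    ultimately show "step (conv (\<lambda>s. wcf (r * s + n mod r)) (n div r) - thetabar m) = wcf n"
      using conv_truncated_late[OF i cut kn] step_threshold(2) by simp
  next
    case False
    have per: "\<And>s. wcf (r*s + n mod r) = (if (s + (1 + L)) mod p (n mod r) = k mod p (n mod r) then 1 else 0)"
      using False i by (simp add: wcf_def xcf_def add.commute add.left_commute)
    show "step (conv (\<lambda>s. wcf (r * s + n mod r)) (n div r) - thetabar m) = wcf n"
      unfolding step_conv_periodic[OF i per kn] using False
      by (simp add: wcf_def xcf_def add.commute add.left_commute)
  qed
qed

end

section \<open>The closed form of z and the sets B_0(d), A(d)\<close>

context cutoff
begin

text \<open>n0 = h + L1(d) - r is the first position of block L + k - 1, the block at which the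
  channels 0..d of z have to fall silent.\<close>
definition n0 :: nat where "n0 = r * (L + k - 1)"

definition zcf :: "nat \<Rightarrow> real" where
  "zcf n = (if n mod r \<le> d \<and> L + k - 2 < n div r then 0 else xcf (n mod r) (1 + n div r))"

definition Bset :: "nat set" where "Bset = {f. 1 \<le> f \<and> f \<le> h - d \<and> ycf (n0 - f) = 1}"

lemma n0_alt: "h + L1 m d - r = n0"
proof -
  have "r * (L + k - 1) = r * L + r * k - r" using L_pos by (simp add: diff_mult_distrib2 algebra_simps)
  then show ?thesis by (simp add: hh_def L1_eq n0_def mult.commute)
qed

lemma n0_split: "n0 = r * (L + k - 2) + r"
proof -
  have "L + k - 1 = (L + k - 2) + 1" using k_ge by linarith
  then show ?thesis by (simp add: n0_def)
qed

lemma n0_h: "n0 = r * L + (h - r)"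
proof -
  have "r * (L + k - 1) = r * L + r * (k - 1)" using k_ge by (simp add: algebra_simps)
  moreover have "r * (k - 1) = h - r" by (simp add: hh_def diff_mult_distrib2)
  ultimately show ?thesis by (simp add: n0_def)
qed

lemma h_ge_r: "r \<le> h" using k_ge by (simp add: hh_def)

lemma h_le_n0: "h \<le> n0"
proof -
  have "r \<le> r * L" using L_pos by simp
  then show ?thesis using n0_h h_ge_r by linarith
qed

lemma B0_eq: "B0 m d = Bset"
  unfolding B0_def Bset_def ys_closed_form using n0_alt by (metis diff_diff_left)

lemma Tot_eq: "Tot m d = card Bset" by (simp add: Tot_def B0_eq)

lemma Bset_sub: "Bset \<subseteq> {1..h}" by (auto simp: Bset_def)
lemma Bset_fin: "finite Bset" using Bset_sub finite_subset by blast

lemma AA_eq: "AA m d = (\<Union>l\<in>{0..d}. (\<lambda>f. l + f) ` Bset)"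
  by (simp add: AA_def Bl_def B0_eq)

lemma AA_sub: "AA m d \<subseteq> {1..h}"
proof
  fix f assume "f \<in> AA m d"
  then obtain l f0 where "l \<le> d" "f0 \<in> Bset" "f = l + f0" unfolding AA_eq by auto
  then show "f \<in> {1..h}" using d_lt r2 by (auto simp: Bset_def hh_def)
qed

lemma AA_fin: "finite (AA m d)" using AA_sub finite_subset by blast

lemma zcf_01: "zcf n = 0 \<or> zcf n = 1" by (simp add: zcf_def xcf_def)

lemma zcf_ycf: "n div r \<le> L + k - 2 \<Longrightarrow> zcf n = ycf n" by (simp add: zcf_def ycf_def)

lemma zcf_one: "zcf n = 1 \<Longrightarrow> xcf (n mod r) (1 + n div r) = 1"
  by (simp add: zcf_def split: if_splits)

lemma xcf_cong: "xcf c (1 + a) = 1 \<Longrightarrow> xcf c (1 + b) = 1 \<Longrightarrow> int (p c) dvd (int a - int b)"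
proof -
  assume "xcf c (1 + a) = 1" "xcf c (1 + b) = 1"
  then have "(1 + a) mod p c = (1 + b) mod p c" by (simp add: xcf_def split: if_splits)
  then have "int (p c) dvd int (1 + a) - int (1 + b)" by (simp only: nat_mod_eq_iff_int_dvd)
  then show ?thesis by simp
qed

lemma xcf_shift: "int (p c) dvd e \<Longrightarrow> xcf c (1 + a) = 1 \<Longrightarrow> int b = int a + e \<Longrightarrow> xcf c (1 + b) = 1"
proof -
  assume a: "int (p c) dvd e" "xcf c (1 + a) = 1" "int b = int a + e"
  then have "(1 + a) mod p c = k mod p c" by (simp add: xcf_def split: if_splits)
  moreover have "(1 + b) mod p c = (1 + a) mod p c"
    using a(1,3) by (simp only: nat_mod_eq_iff_int_dvd) simp
  ultimately show ?thesis by (simp add: xcf_def)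
qed

section \<open>Counting the active points of A(d)\<close>

definition Bres :: "nat \<Rightarrow> nat set" where "Bres c = {f \<in> Bset. (n0 - f) mod r = c}"
definition Act :: "nat \<Rightarrow> nat set" where "Act n = {f \<in> AA m d. zcf (n - f) = 1}"
definition Act_res :: "nat \<Rightarrow> nat \<Rightarrow> nat set" where "Act_res n c = {f \<in> Act n. (n - f) mod r = c}"
definition Hit :: "nat \<Rightarrow> nat \<Rightarrow> nat \<Rightarrow> nat set" where
  "Hit n l c = {f \<in> Bset. zcf (n - l - f) = 1 \<and> (n - l - f) mod r = c}"

lemma Act_fin: "finite (Act n)" using AA_fin by (simp add: Act_def)

lemma card_Act: "card (Act n) = (\<Sum>c<r. card (Act_res n c))"
  unfolding Act_res_def by (rule card_by_residue[OF r_pos Act_fin])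

lemma card_Bset: "card Bset = (\<Sum>c<r. card (Bres c))"
  unfolding Bres_def by (rule card_by_residue[OF r_pos Bset_fin])

lemma below_n0: assumes "jj \<le> L + k - 2" "c < r" shows "r * jj + c < n0"
proof -
  have "r * jj \<le> r * (L + k - 2)" using assms(1) by simp
  then show ?thesis using assms(2) n0_split by linarith
qed

text \<open>Every channel c contributes at least 2r points to B_0(d): the 2r firing blocks of channel c
  closest below block L + k - 1, which lie within the window of length h - d.\<close>
lemma Bres_witness:
  assumes c: "c < r" and a: "a < 2*r"
  defines "jj \<equiv> k - 1 + p c * ((L - 1) div p c) - a * p c"
  shows "n0 - (r * jj + c) \<in> Bres c" and "L \<le> jj" and "jj \<le> L + k - 2"
proof -
  define P where "P = p c"
  define w where "w = (L - 1) div P"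
  have P0: "P > 0" using p_pos[OF c] by (simp add: P_def)
  have Pw1: "P * w \<le> L - 1" unfolding w_def by (metis div_mult_mod_eq le_add1 mult.commute)
  have Pw2: "L - 1 < P * w + P"
  proof -
    have "(L - 1) mod P < P" using P0 by simp
    moreover have "P * w + (L - 1) mod P = L - 1" unfolding w_def by (metis div_mult_mod_eq mult.commute)
    ultimately show ?thesis by linarith
  qed
  have kb: "2 * r * P + 1 \<le> k" using support_lt_k[OF c, of "2*r"] by (simp add: P_def)
  have jj: "jj = k - 1 + P * w - a * P" by (simp add: jj_def P_def w_def)
  have "(a + 1) * P \<le> 2 * r * P" using a by (intro mult_le_mono1) simp
  then show low: "L \<le> jj" unfolding jj using kb Pw2 L_pos by (simp add: algebra_simps)
  show high: "jj \<le> L + k - 2" unfolding jj using Pw1 L_pos k_ge by linarith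
  define q where "q = r * jj + c"
  have qm: "q mod r = c" "q div r = jj" using c by (simp_all add: q_def)
  have qlt: "q < n0" unfolding q_def using below_n0[OF high c] .
  have qge: "r * L \<le> q" using low unfolding q_def by (metis le_add1 mult_le_mono2 order_trans)
  have ap: "a * P \<le> k - 1 + P * w" using low jj L_pos by linarith
  have "(1 + jj) + a * P = k + P * w" unfolding jj using ap k_ge by linarith
  then have "(1 + jj) mod P = (k + P * w) mod P" by (metis mod_mult_self2 mult.commute)
  then have "ycf q = 1" unfolding ycf_def qm by (simp add: xcf_def P_def)
  moreover have "1 \<le> n0 - q" "n0 - q \<le> h - d" using qlt qge n0_h d_lt h_ge_r by linarith+
  ultimately show "n0 - (r * jj + c) \<in> Bres c"
    using qlt qm unfolding q_def[symmetric] by (simp add: Bres_def Bset_def)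
qed

lemma Bres_ge: assumes c: "c < r" shows "2 * r \<le> card (Bres c)"
proof -
  define jj where "jj a = k - 1 + p c * ((L - 1) div p c) - a * p c" for a
  define F where "F a = n0 - (r * jj a + c)" for a
  have inB: "F ` {..<2*r} \<subseteq> Bres c" using Bres_witness[OF c] by (auto simp: F_def jj_def)
  have inj: "inj_on F {..<2*r}"
  proof (rule inj_onI)
    fix a b assume a: "a \<in> {..<2*r}" and b: "b \<in> {..<2*r}" and e: "F a = F b"
    have "r * jj a + c < n0" "r * jj b + c < n0"
      using below_n0[OF Bres_witness(3)[OF c] c] a b unfolding jj_def by auto
    then have "r * jj a + c = r * jj b + c" using e unfolding F_def by linarith
    then have "jj a = jj b" using r_pos by simp
    moreover have "a * p c \<le> k - 1 + p c * ((L - 1) div p c)" "b * p c \<le> k - 1 + p c * ((L - 1) div p c)"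
      using Bres_witness(2)[OF c] a b L_pos unfolding jj_def by fastforce+
    ultimately have "a * p c = b * p c" unfolding jj_def by linarith
    then show "a = b" using p_pos[OF c] by simp
  qed
  have "card (F ` {..<2*r}) = 2 * r" using card_image[OF inj] by simp
  moreover have "finite (Bres c)" using Bset_fin by (simp add: Bres_def)
  ultimately show ?thesis using inB by (metis card_mono)
qed

lemma Bset_ge1: "1 \<le> card Bset"
proof -
  have "Bres 0 \<subseteq> Bset" by (auto simp: Bres_def)
  then have "card (Bres 0) \<le> card Bset" using Bset_fin by (rule card_mono[rotated])
  then show ?thesis using Bres_ge[OF r_pos] r_pos by linarith
qed

text \<open>At a kill time n0 + l0 (l0 \<le> d) every shifted copy l0 + B_0(d) inside A(d) is active:
  there z still coincides with y.\<close>
lemma kill_card: "l0 \<le> d \<Longrightarrow> card Bset \<le> card (Act (n0 + l0))"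
proof -
  assume l0: "l0 \<le> d"
  have "(\<lambda>f. l0 + f) ` Bset \<subseteq> Act (n0 + l0)"
  proof
    fix x assume "x \<in> (\<lambda>f. l0 + f) ` Bset"
    then obtain f where f: "f \<in> Bset" "x = l0 + f" by blast
    have "n0 - f < n0" using f h_le_n0 by (auto simp: Bset_def)
    then have "n0 - f < (L + k - 2 + 1) * r" using n0_split by (simp add: algebra_simps)
    then have "(n0 - f) div r < L + k - 2 + 1" by (rule less_mult_imp_div_less)
    then have "(n0 - f) div r \<le> L + k - 2" by simp
    moreover have "x \<in> AA m d" unfolding AA_eq using f l0 by auto
    moreover have "n0 + l0 - x = n0 - f" using f by simp
    ultimately show "x \<in> Act (n0 + l0)" using f zcf_ycf by (simp add: Act_def Bset_def)
  qed
  moreover have "card ((\<lambda>f. l0 + f) ` Bset) = card Bset" by (rule card_image) simp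
  ultimately show ?thesis using Act_fin by (metis card_mono)
qed

lemma Act_res_le_Hit: "card (Act_res n c) \<le> (\<Sum>l\<in>{0..d}. card (Hit n l c))"
proof -
  have fin: "finite (Hit n l c)" for l by (auto simp: Hit_def intro: finite_subset[OF _ Bset_fin])
  have "Act_res n c \<subseteq> (\<Union>l\<in>{0..d}. (\<lambda>f. l + f) ` Hit n l c)"
  proof
    fix x assume x: "x \<in> Act_res n c"
    then have "x \<in> AA m d" by (simp add: Act_res_def Act_def)
    then obtain l f where lf: "l \<in> {0..d}" "f \<in> Bset" "x = l + f" unfolding AA_eq by blast
    have "n - x = n - l - f" using lf by simp
    then have "f \<in> Hit n l c" using x lf by (simp add: Act_res_def Act_def Hit_def)
    then show "x \<in> (\<Union>l\<in>{0..d}. (\<lambda>f. l + f) ` Hit n l c)" using lf by blast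
  qed
  then have "card (Act_res n c) \<le> card (\<Union>l\<in>{0..d}. (\<lambda>f. l + f) ` Hit n l c)"
    by (intro card_mono) (auto simp: fin)
  also have "\<dots> \<le> (\<Sum>l\<in>{0..d}. card ((\<lambda>f. l + f) ` Hit n l c))" by (rule card_UN_le) simp
  also have "\<dots> \<le> (\<Sum>l\<in>{0..d}. card (Hit n l c))" by (intro sum_mono card_image_le fin)
  finally show ?thesis .
qed

lemma hit_facts:
  assumes n: "h \<le> n" and l: "l \<le> d" and f: "f \<in> Hit n l c"
  shows "xcf ((n0 - f) mod r) (1 + (n0 - f) div r) = 1" "xcf c (1 + (n - l - f) div r) = 1"
    "(n - l - f) mod r = c" "int (n - l - f) = int (n0 - f) + (int n - int l - int n0)"
    "1 \<le> f" "f \<le> h"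
proof -
  have fB: "f \<in> Bset" and Z: "zcf (n - l - f) = 1" and vc: "(n - l - f) mod r = c"
    using f by (auto simp: Hit_def)
  from fB have "ycf (n0 - f) = 1" by (simp add: Bset_def)
  then show "xcf ((n0 - f) mod r) (1 + (n0 - f) div r) = 1" by (simp add: ycf_def)
  show "xcf c (1 + (n - l - f) div r) = 1" using zcf_one[OF Z] vc by simp
  show "(n - l - f) mod r = c" by (rule vc)
  have "f \<le> h - d" "1 \<le> f" using fB by (auto simp: Bset_def)
  then show "1 \<le> f" "f \<le> h" by auto
  have "l + f \<le> n" using \<open>f \<le> h - d\<close> n l d_lt h_ge_r by linarith
  moreover have "f \<le> n0" using \<open>f \<le> h - d\<close> h_le_n0 by linarith
  ultimately show "int (n - l - f) = int (n0 - f) + (int n - int l - int n0)" by (simp add: of_nat_diff)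
qed

lemma hit_foreign_channel:
  assumes n: "h \<le> n" and l: "l \<le> d" and f: "f \<in> Hit n l c"
    and nd: "\<not> int (r * p c) dvd (int n - int l - int n0)"
  shows "(n0 - f) mod r \<noteq> c"
proof
  assume qc: "(n0 - f) mod r = c"
  note H = hit_facts[OF n l f]
  have "(n - l - f) mod r = (n0 - f) mod r" using H(3) qc by simp
  from int_diff_by_blocks[OF this] H(4)
  have e: "int n - int l - int n0 = int r * (int ((n - l - f) div r) - int ((n0 - f) div r))" by simp
  have "int (p c) dvd int ((n - l - f) div r) - int ((n0 - f) div r)"
    using xcf_cong[OF H(2)] H(1) qc by simp
  then have "int (r * p c) dvd int n - int l - int n0" unfolding e by simp
  then show False using nd by simp
qed

text \<open>... and then there is at most one hit: two hits would give two firing pairs in distinct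
  channels c, c' whose block distance is divisible by p_c p_c' > k, yet smaller than k.\<close>
lemma hit_unique:
  assumes n: "h \<le> n" and l: "l \<le> d" and c: "c < r"
    and nd: "\<not> int (r * p c) dvd (int n - int l - int n0)"
    and f1: "f1 \<in> Hit n l c" and f2: "f2 \<in> Hit n l c"
  shows "f1 = f2"
proof -
  define q1 where "q1 = n0 - f1"
  define q2 where "q2 = n0 - f2"
  note H1 = hit_facts[OF n l f1, folded q1_def] and H2 = hit_facts[OF n l f2, folded q2_def]
  have vv: "int (n - l - f1) - int (n - l - f2)
      = int r * (int ((n - l - f1) div r) - int ((n - l - f2) div r))"
    using H1(3) H2(3) by (intro int_diff_by_blocks) simp
  then have "int r dvd int q1 - int q2" using H1(4) H2(4) by (metis add_diff_cancel_right dvd_triv_left)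
  then have qm: "q1 mod r = q2 mod r" by (simp add: nat_mod_eq_iff_int_dvd)
  have qq: "int q1 - int q2 = int r * (int (q1 div r) - int (q2 div r))" by (rule int_diff_by_blocks[OF qm])
  define D where "D = int (q1 div r) - int (q2 div r)"
  have DD: "D = int ((n - l - f1) div r) - int ((n - l - f2) div r)"
    using vv qq H1(4) H2(4) r_pos D_def by simp
  define cs where "cs = q1 mod r"
  have cs: "cs < r" using r_pos by (simp add: cs_def)
  have csc: "cs \<noteq> c" using hit_foreign_channel[OF n l f1 nd] by (simp add: cs_def q1_def)
  have d1: "int (p cs) dvd D" using xcf_cong[OF H1(1)] H2(1) qm by (simp add: D_def cs_def)
  have d2: "int (p c) dvd D" using xcf_cong[OF H1(2) H2(2)] DD by simp
  have "coprime (int (p cs)) (int (p c))"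
    using primes_coprime[OF p_prime[OF cs] p_prime[OF c]] p_inj[OF cs c] csc by (auto simp: coprime_int_iff)
  then have d12: "int (p cs) * int (p c) dvd D" using divides_mult[OF d1 d2] by blast
  have "\<bar>int q1 - int q2\<bar> < int h" using H1(5,6) H2(5,6) h_le_n0 unfolding q1_def q2_def by (auto simp: of_nat_diff)
  then have "\<bar>D\<bar> < int k" using qq r_pos unfolding D_def by (simp add: hh_def abs_mult)
  also have "int k < int (p cs) * int (p c)" using k_lt_pp[OF cs c csc] by (simp flip: of_nat_mult)
  finally have "\<bar>D\<bar> < int (p cs) * int (p c)" .
  then have "D = 0"
  proof (rule contrapos_pp)
    assume "D \<noteq> 0"
    then have "\<bar>int (p cs) * int (p c)\<bar> \<le> \<bar>D\<bar>" using dvd_imp_le_int d12 by blast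
    then show "\<not> \<bar>D\<bar> < int (p cs) * int (p c)" by simp
  qed
  then have "q1 = q2" using qq D_def by simp
  then show "f1 = f2" using H1(5,6) H2(5,6) h_le_n0 unfolding q1_def q2_def by linarith
qed

lemma Hit_le1:
  assumes "h \<le> n" "l \<le> d" "c < r" "\<not> int (r * p c) dvd (int n - int l - int n0)"
  shows "card (Hit n l c) \<le> 1"
proof (rule card_le1_if_no_two)
  show "finite (Hit n l c)" by (rule finite_subset[OF _ Bset_fin]) (auto simp: Hit_def)
  fix x y assume "x \<in> Hit n l c" "y \<in> Hit n l c" "x < y"
  then show False using hit_unique[OF assms, of x y] by simp
qed

text \<open>Channels whose offsets n - l - n0 are never aligned with r p_c have at most d + 1 active
  points, hence at least r fewer than B_0(d) has in that channel.\<close>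
lemma Act_res_unaligned:
  assumes n: "h \<le> n" and c: "c < r" and nd: "\<forall>l\<le>d. \<not> int (r * p c) dvd (int n - int l - int n0)"
  shows "card (Act_res n c) + r \<le> card (Bres c)"
proof -
  have "card (Act_res n c) \<le> (\<Sum>l\<in>{0..d}. card (Hit n l c))" by (rule Act_res_le_Hit)
  also have "\<dots> \<le> (\<Sum>l\<in>{0..d}. 1)" by (rule sum_mono) (use Hit_le1[OF n _ c] nd in auto)
  also have "\<dots> = d + 1" by simp
  finally show ?thesis using Bres_ge[OF c] d_lt by linarith
qed

lemma edge_le1:
  assumes l0: "l0 \<le> d" and n: "h \<le> n"
  shows "card {f \<in> {1..h}. (f \<le> l0 \<or> h - d + l0 < f) \<and> (n - f) mod r = c} \<le> 1"
proof (rule card_le1_if_no_two)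
  fix f1 f2 assume f: "f1 \<in> {f \<in> {1..h}. (f \<le> l0 \<or> h - d + l0 < f) \<and> (n - f) mod r = c}"
    "f2 \<in> {f \<in> {1..h}. (f \<le> l0 \<or> h - d + l0 < f) \<and> (n - f) mod r = c}" "f1 < f2"
  have f1: "1 \<le> f1" "f1 \<le> h" "f1 \<le> l0 \<or> h - d + l0 < f1" "(n - f1) mod r = c" using f(1) by auto
  have f2: "1 \<le> f2" "f2 \<le> h" "f2 \<le> l0 \<or> h - d + l0 < f2" "(n - f2) mod r = c" using f(2) by auto
  have "(n - f1) mod r = (n - f2) mod r" using f1(4) f2(4) by simp
  then have "int r dvd int (n - f1) - int (n - f2)" by (simp only: nat_mod_eq_iff_int_dvd)
  moreover have "int (n - f1) - int (n - f2) = int (f2 - f1)" using f(3) f1 f2 n by (simp add: of_nat_diff)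
  ultimately have "r dvd f2 - f1" by (simp add: int_dvd_int_iff)
  then obtain s where s: "f2 - f1 = r * s" by blast
  have "s \<ge> 1" using s f(3) by (cases s) auto
  then have rs: "r \<le> f2 - f1" using s by simp
  show False
  proof (cases "f2 \<le> l0")
    case True then show ?thesis using rs f(3) l0 d_lt by linarith
  next
    case F2: False
    then have f2b: "h - d + l0 < f2" using f2(3) by simp
    show ?thesis
    proof (cases "f1 \<le> l0")
      case True
      have "r * (k - 1) < r * s" using s f2b True f2(2) d_lt h_ge_r by (simp add: hh_def diff_mult_distrib2)
      moreover have "r * s < r * k" using s f1(1) f2(2) f(3) unfolding hh_def by linarith
      ultimately have "k - 1 < s" "s < k" by simp_all
      then show False by linarith
    next
      case False
      then show False using f1(3) rs f2(2) d_lt f(3) h_ge_r by linarith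
    qed
  qed
qed simp

text \<open>In a channel c aligned with l0 (offset r e with p_c dividing e), the active points are
  l0 + (points of Bres c) plus at most one point near the edges of the window.\<close>
lemma Act_res_aligned:
  assumes n: "h \<le> n" and l0: "l0 \<le> d" and c: "c < r"
    and e: "int n - int l0 - int n0 = int r * e" and pe: "int (p c) dvd e"
  shows "card (Act_res n c) \<le> card (Bres c) + 1"
proof -
  define E where "E = {f \<in> {1..h}. (f \<le> l0 \<or> h - d + l0 < f) \<and> (n - f) mod r = c}"
  have sub: "Act_res n c \<subseteq> (\<lambda>f. l0 + f) ` Bres c \<union> E"
  proof
    fix x assume x: "x \<in> Act_res n c"
    have xA: "x \<in> {1..h}" using x AA_sub by (auto simp: Act_res_def Act_def)
    have Z: "zcf (n - x) = 1" "(n - x) mod r = c" using x by (auto simp: Act_res_def Act_def)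
    show "x \<in> (\<lambda>f. l0 + f) ` Bres c \<union> E"
    proof (cases "x \<le> l0 \<or> h - d + l0 < x")
      case True then show ?thesis using xA Z by (simp add: E_def)
    next
      case False
      define f' where "f' = x - l0"
      have fb: "1 \<le> f'" "f' \<le> h - d" using False by (auto simp: f'_def)
      define v where "v = n - x"
      define q where "q = n0 - f'"
      have iv: "int v = int q + int r * e"
        using e xA n h_le_n0 fb False unfolding v_def q_def f'_def by (simp add: of_nat_diff)
      then have vm: "v mod r = q mod r" by (simp add: nat_mod_eq_iff_int_dvd)
      have "int (v div r) - int (q div r) = e" using int_diff_by_blocks[OF vm] iv r_pos by simp
      then have qv: "int (q div r) = int (v div r) + (- e)" by simp
      have "xcf c (1 + v div r) = 1" using zcf_one[OF Z(1)] Z(2) unfolding v_def by simp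
      then have "xcf c (1 + q div r) = 1" using xcf_shift[OF _ _ qv] pe by simp
      then have "ycf q = 1" "q mod r = c" using vm Z(2) unfolding ycf_def v_def by simp_all
      then have "f' \<in> Bres c" using fb unfolding Bres_def Bset_def q_def by simp
      moreover have "x = l0 + f'" using False by (simp add: f'_def)
      ultimately show ?thesis by blast
    qed
  qed
  have finB: "finite (Bres c)" using Bset_fin by (simp add: Bres_def)
  have "card (Act_res n c) \<le> card ((\<lambda>f. l0 + f) ` Bres c \<union> E)"
    by (rule card_mono[OF _ sub]) (simp add: finB E_def)
  also have "\<dots> \<le> card ((\<lambda>f. l0 + f) ` Bres c) + card E" by (rule card_Un_le)
  also have "\<dots> \<le> card (Bres c) + 1"
    using card_image_le[OF finB, of "\<lambda>f. l0 + f"] edge_le1[OF l0 n, of c] by (simp add: E_def)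
  finally show ?thesis .
qed

text \<open>Summing over the channels: one channel with a deficit of r outweighs the surplus of at
  most 1 in each of the other r - 1 channels.\<close>
lemma Act_lt_Bset:
  assumes "cs < r" "card (Act_res n cs) + r \<le> card (Bres cs)"
    "\<And>c. c < r \<Longrightarrow> card (Act_res n c) \<le> card (Bres c) + 1"
  shows "card (Act n) + 1 \<le> card Bset"
proof -
  have "(\<Sum>c\<in>{..<r}-{cs}. card (Act_res n c)) \<le> (\<Sum>c\<in>{..<r}-{cs}. card (Bres c) + 1)"
    by (rule sum_mono) (use assms(3) in auto)
  also have "\<dots> = (\<Sum>c\<in>{..<r}-{cs}. card (Bres c)) + (\<Sum>c\<in>{..<r}-{cs}. 1)" by (rule sum.distrib)
  also have "(\<Sum>c\<in>{..<r}-{cs}. (1::nat)) = r - 1" using assms(1) by simp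
  finally have rest: "(\<Sum>c\<in>{..<r}-{cs}. card (Act_res n c)) \<le> (\<Sum>c\<in>{..<r}-{cs}. card (Bres c)) + (r - 1)" .
  have "card (Act n) = card (Act_res n cs) + (\<Sum>c\<in>{..<r}-{cs}. card (Act_res n c))"
    unfolding card_Act using assms(1) by (simp add: sum.remove)
  moreover have "card Bset = card (Bres cs) + (\<Sum>c\<in>{..<r}-{cs}. card (Bres c))"
    unfolding card_Bset using assms(1) by (simp add: sum.remove)
  ultimately show ?thesis using rest assms(2) r_pos by linarith
qed

lemma exists_prime_ndvd:
  assumes "e \<noteq> 0" "\<bar>e\<bar> < int L"
  obtains c where "c \<le> d" "\<not> int (p c) dvd e"
proof (rule ccontr)
  assume "\<not> thesis"
  then have all: "\<forall>c\<le>d. int (p c) dvd e" using that by blast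
  have "L dvd nat \<bar>e\<bar>"
  proof (rule Lcm_least)
    fix b assume "b \<in> pr m ` {0..d}"
    then obtain c where "c \<le> d" "b = p c" by auto
    then have "int b dvd \<bar>e\<bar>" using all by simp
    also have "\<bar>e\<bar> = int (nat \<bar>e\<bar>)" by simp
    finally show "b dvd nat \<bar>e\<bar>" by (simp only: int_dvd_int_iff)
  qed
  moreover have "nat \<bar>e\<bar> > 0" using assms(1) by simp
  ultimately have "L \<le> nat \<bar>e\<bar>" by (rule dvd_imp_le)
  then have "int L \<le> \<bar>e\<bar>" by linarith
  then show False using assms(2) by simp
qed

text \<open>If the offset of l0 is r e, the offsets of all other l \<le> d are not multiples of r, so
  a channel c with p_c not dividing e is unaligned.\<close>
lemma unaligned_if_ndvd:
  assumes l0: "l0 \<le> d" and e: "int n - int l0 - int n0 = int r * e" and c: "\<not> int (p c) dvd e"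
  shows "\<forall>l\<le>d. \<not> int (r * p c) dvd (int n - int l - int n0)"
proof (intro allI impI notI)
  fix l assume l: "l \<le> d" and dv: "int (r * p c) dvd (int n - int l - int n0)"
  show False
  proof (cases "l = l0")
    case True
    then have "int r * int (p c) dvd int r * e" using dv e by simp
    then show False using c r_pos by simp
  next
    case False
    have "int r dvd int n - int l - int n0" using dv by (metis dvd_mult_left of_nat_mult)
    moreover have "int r dvd int n - int l0 - int n0" using e by simp
    ultimately have "int r dvd (int n - int l - int n0) - (int n - int l0 - int n0)" by (rule dvd_diff)
    then have "int r dvd int l0 - int l" by simp
    moreover have "\<bar>int l0 - int l\<bar> < int r" using l l0 d_lt by auto
    ultimately have "int l0 - int l = 0" by (rule int_dvd_small_zero)
    then show False using False by simp
  qed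
qed

text \<open>A firing time n of z whose channel is aligned with l0 lies e blocks before the kill time
  n0 + l0, with 0 < -e < L (z fires only before the kill time, and n is past the initial
  segment of length h).\<close>
lemma aligned_firing_offset:
  assumes n: "h \<le> n" and Z: "zcf n = 1" and l0: "l0 \<le> d"
    and e: "int n - int l0 - int n0 = int r * e"
  shows "e \<noteq> 0" and "\<bar>e\<bar> < int L"
proof -
  have "int n0 = int r * int (L + k - 1)" by (simp add: n0_def)
  then have nX: "int n = int l0 + int r * (int (L + k - 1) + e)" using e by (simp add: algebra_simps)
  have l0r: "l0 < r" using l0 d_lt by simp
  have "int n mod int r = int l0 mod int r" using nX by simp
  then have nmod: "n mod r = l0" using l0r by (metis of_nat_eq_iff of_nat_mod mod_less)
  have "int n div int r = int l0 div int r + (int (L + k - 1) + e)" using nX r_pos by simp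
  then have ndiv: "int (n div r) = int (L + k - 1) + e"
    using l0r by (simp add: zdiv_int[symmetric] div_pos_pos_trivial)
  have "n div r \<le> L + k - 2" using Z nmod l0 by (auto simp: zcf_def split: if_splits)
  then have e1: "e \<le> -1" using ndiv L_pos k_ge by linarith
  have "k \<le> n div r" using kernel_block_ge_k[OF n] .
  then have e2: "1 - int L \<le> e" using ndiv L_pos k_ge by linarith
  show "e \<noteq> 0" "\<bar>e\<bar> < int L" using e1 e2 by auto
qed

text \<open>If no offset
  n - l - n0 (l \<le> d) is a multiple of r, every channel is unaligned.  Otherwise the offset of
  some l0 is r e, and a prime p_c (c \<le> d) not dividing e makes channel c unaligned, while
  the remaining channels have a surplus of at most 1.\<close>
lemma fire_card:
  assumes n: "h \<le> n" and Z: "zcf n = 1"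
  shows "card (Act n) + 1 \<le> card Bset"
proof (cases "\<exists>l0\<le>d. int r dvd (int n - int l0 - int n0)")
  case False
  then have free: "\<forall>l\<le>d. \<not> int (r * p c) dvd (int n - int l - int n0)" for c
    by (metis dvd_mult_left of_nat_mult)
  show ?thesis
  proof (rule Act_lt_Bset[OF r_pos Act_res_unaligned[OF n r_pos free]])
    fix c assume "c < r"
    from Act_res_unaligned[OF n this free] show "card (Act_res n c) \<le> card (Bres c) + 1" by simp
  qed
next
  case True
  then obtain l0 e where l0: "l0 \<le> d" and e: "int n - int l0 - int n0 = int r * e" by blast
  obtain cs where cs: "cs \<le> d" "\<not> int (p cs) dvd e"
    using exists_prime_ndvd aligned_firing_offset[OF n Z l0 e] by blast
  have csr: "cs < r" using cs(1) d_lt by simp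
  show ?thesis
  proof (rule Act_lt_Bset[OF csr Act_res_unaligned[OF n csr unaligned_if_ndvd[OF l0 e cs(2)]]])
    fix c assume c: "c < r"
    show "card (Act_res n c) \<le> card (Bres c) + 1"
    proof (cases "int (p c) dvd e")
      case True then show ?thesis using Act_res_aligned[OF n l0 c e] by simp
    next
      case False then show ?thesis using Act_res_unaligned[OF n c unaligned_if_ndvd[OF l0 e False]] by simp
    qed
  qed
qed

section \<open>The recurrence for z\<close>

lemma cc_sum:
  "(\<Sum>f = 1..h. cc lam m d f * zcf (n - f))
    = (\<Sum>f = 1..h. bb m f * zcf (n - f)) + betad lam m d * real (card (Act n))"
proof -
  have "(\<Sum>f = 1..h. cc lam m d f * zcf (n - f))
      = (\<Sum>f = 1..h. bb m f * zcf (n - f) + betad lam m d * (if f \<in> AA m d then zcf (n - f) else 0))"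
    by (rule sum.cong) (auto simp: cc_def algebra_simps)
  also have "\<dots> = (\<Sum>f = 1..h. bb m f * zcf (n - f))
      + betad lam m d * (\<Sum>f = 1..h. if f \<in> AA m d then zcf (n - f) else 0)"
    by (simp add: sum.distrib sum_distrib_left)
  also have "(\<Sum>f = 1..h. if f \<in> AA m d then zcf (n - f) else 0) = (\<Sum>f\<in>{f\<in>{1..h}. f \<in> AA m d}. zcf (n - f))"
    using sum.inter_filter[of "{1..h}" "\<lambda>f. zcf (n - f)" "\<lambda>f. f \<in> AA m d"] by simp
  also have "{f\<in>{1..h}. f \<in> AA m d} = AA m d" using AA_sub by auto
  also have "(\<Sum>f\<in>AA m d. zcf (n - f)) = (\<Sum>f\<in>AA m d. if zcf (n - f) = 1 then 1 else 0)"
    by (rule sum.cong) (use zcf_01 in auto)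
  also have "\<dots> = real (card (Act n))"
    using sum.inter_filter[of "AA m d" "\<lambda>f. 1::real" "\<lambda>f. zcf (n - f) = 1", OF AA_fin]
    by (simp add: Act_def)
  finally show ?thesis .
qed

definition zsum :: "nat \<Rightarrow> real" where
  "zsum n = conv (\<lambda>s. zcf (r*s + n mod r)) (n div r)"

lemma zsum_periodic:
  assumes n: "h \<le> n" and S: "zsum n = conv (\<lambda>s. xcf (n mod r) (1 + s)) (n div r)"
    and Z: "zcf n = xcf (n mod r) (1 + n div r)"
  shows "(zcf n = 1 \<and> zsum n = 2 * real r) \<or> (zcf n = 0 \<and> zsum n \<le> 2 * real r - 1)"
proof -
  have i: "n mod r < r" using r_pos by simp
  have per: "\<And>s. xcf (n mod r) (1 + s) = (if (s + 1) mod p (n mod r) = k mod p (n mod r) then 1 else 0)"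
    by (simp add: xcf_def add.commute)
  note cp = conv_periodic[OF i per kernel_block_ge_k[OF n]]
  show ?thesis
  proof (cases "(n div r + 1) mod p (n mod r) = k mod p (n mod r)")
    case True
    then show ?thesis using cp(1) S Z by (simp add: xcf_def add.commute)
  next
    case False
    then have "zsum n \<le> 2 * real r - 1" using cp(2) S by simp
    moreover have "zcf n = 0" using Z False by (simp add: xcf_def add.commute)
    ultimately show ?thesis by simp
  qed
qed

text \<open>The unperturbed sum decides zcf correctly, except at the kill times n0 + l0 (l0 \<le> d),
  where it may reach 2r although zcf is 0.  Channels above d are periodic; a channel c \<le> d
  agrees with the periodic one up to block L + k - 1 (the kill time) and is silent after it.\<close>
lemma zsum_cases:
  assumes n: "h \<le> n"
  shows "(zcf n = 1 \<and> zsum n = 2 * real r) \<or> (zcf n = 0 \<and> zsum n \<le> 2 * real r - 1)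
    \<or> (zcf n = 0 \<and> zsum n \<le> 2 * real r \<and> n mod r \<le> d \<and> n = n0 + n mod r)"
proof (cases "n mod r \<le> d")
  case False
  have "(\<lambda>s. zcf (r*s + n mod r)) = (\<lambda>s. xcf (n mod r) (1 + s))"
    using False r_pos by (auto simp: zcf_def)
  then have "zsum n = conv (\<lambda>s. xcf (n mod r) (1 + s)) (n div r)" by (simp add: zsum_def)
  then show ?thesis using zsum_periodic[OF n] False by (simp add: zcf_def)
next
  case True
  note kn = kernel_block_ge_k[OF n]
  have i: "n mod r < r" using r_pos by simp
  define K where "K = L + k - 2"
  have cut: "\<And>s. zcf (r*s + n mod r) = (if (s + 1) mod p (n mod r) = k mod p (n mod r) \<and> s \<le> K then 1 else 0)"
    using True i by (auto simp: zcf_def xcf_def K_def add.commute)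
  have per: "\<And>s. xcf (n mod r) (1 + s) = (if (s + 1) mod p (n mod r) = k mod p (n mod r) then 1 else 0)"
    by (simp add: xcf_def add.commute)
  have KK: "K + 1 + 1 = L + k" using k_ge L_pos by (simp add: K_def)
  have Lk: "(K + 1 + 1) mod p (n mod r) = k mod p (n mod r)"
    using dvd_L[OF True] KK by (auto elim!: dvdE)
  consider "n div r \<le> K" | "n div r = K + 1" | "K + 2 \<le> n div r" by linarith
  then show ?thesis
  proof cases
    case 1
    have "zsum n = conv (\<lambda>s. xcf (n mod r) (1 + s)) (n div r)"
      unfolding zsum_def using conv_truncated_early[OF cut per] 1 by simp
    moreover have "zcf n = xcf (n mod r) (1 + n div r)" using 1 by (simp add: zcf_def K_def)
    ultimately show ?thesis using zsum_periodic[OF n] by blast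
  next
    case 2
    then have "zsum n \<le> 2 * real r" using conv_truncated_early[OF cut per] conv_periodic(1)[OF i per kn] Lk
      by (simp add: zsum_def)
    moreover have "n = n0 + n mod r"
    proof -
      have "n div r = L + k - 1" using 2 KK by linarith
      then have "r * (n div r) = n0" by (simp add: n0_def)
      then show ?thesis by (metis div_mult_mod_eq mult.commute)
    qed
    ultimately show ?thesis using True 2 by (simp add: zcf_def K_def)
  next
    case 3
    have "zsum n \<le> 2 * real r - 1" unfolding zsum_def
      by (rule conv_truncated_late[OF i cut kn]) (use Lk 3 in simp_all)
    then show ?thesis using True 3 by (simp add: zcf_def K_def)
  qed
qed

lemma zs_closed_form:
  assumes l1: "-1 \<le> lam" and l0: "lam < 0"
  shows "zs lam m d n = zcf n"
  unfolding zs_def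
proof (rule thr_seq_eq)
  fix n assume n: "n < h"
  then have "n div r \<le> L + k - 2" using below_h_block_lt_k L_pos by fastforce
  then show "ys m n = zcf n" using ys_closed_form zcf_ycf by simp
next
  fix n assume n: "h \<le> n"
  define T where "T = real (card Bset)"
  define N where "N = real (card (Act n))"
  define S where "S = zsum n"
  have T1: "T \<ge> 1" using Bset_ge1 by (simp add: T_def)
  have N0: "N \<ge> 0" by (simp add: N_def)
  note margin = perturbation_margins[OF T1 l1 l0 N0]
  have total: "(\<Sum>f = 1..h. cc lam m d f * zcf (n - f)) - theta2 lam m d
      = (S - 2 * real r) + ((lam / T) * N - (lam - (lam / T) / 8))"
    unfolding cc_sum interleaved_sum[OF n]
    by (simp add: S_def zsum_def N_def T_def theta2_def xi_def betad_def Tot_eq thetabar_def)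
  from zsum_cases[OF n, folded S_def]
  show "step ((\<Sum>f = 1..h. cc lam m d f * zcf (n - f)) - theta2 lam m d) = zcf n"
  proof (elim disjE conjE)
    assume "zcf n = 1" "S = 2 * real r"
    moreover have "N \<le> T - 1" using fire_card[OF n \<open>zcf n = 1\<close>] by (simp add: N_def T_def)
    ultimately show ?thesis unfolding total using margin(2) by (simp add: step_nonneg)
  next
    assume "zcf n = 0" "S \<le> 2 * real r - 1"
    moreover have "(S - 2 * real r) + ((lam / T) * N - (lam - (lam / T) / 8)) < 0"
      using calculation margin(1,4) by linarith
    ultimately show ?thesis unfolding total by (simp add: step_neg)
  next
    assume "zcf n = 0" "S \<le> 2 * real r" "n mod r \<le> d" "n = n0 + n mod r"
    moreover have "T \<le> N" using kill_card[OF \<open>n mod r \<le> d\<close>] \<open>n = n0 + n mod r\<close>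
      by (simp add: N_def T_def)
    moreover have "(S - 2 * real r) + ((lam / T) * N - (lam - (lam / T) / 8)) < 0"
      using calculation margin(3) by linarith
    ultimately show ?thesis unfolding total by (simp add: step_neg)
  qed
qed

text \<open>z shifted by L1(d) = r L is w: the channels 0..d of x are L-periodic.\<close>
lemma zcf_shift: "zcf (r * L + n) = wcf n"
proof -
  have dm: "(r * L + n) mod r = n mod r" "(r * L + n) div r = L + n div r" using r_pos by simp_all
  show ?thesis
  proof (cases "n mod r \<le> d")
    case True
    have "xcf (n mod r) (1 + (L + n div r)) = xcf (n mod r) (1 + n div r)"
      using xcf_periodic_L[OF True, of "1 + n div r"] by (simp add: add.commute add.left_commute)
    moreover have "(L + k - 2 < L + n div r) = (\<not> n div r \<le> k - 2)" using k_ge by linarith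
    ultimately show ?thesis using True unfolding zcf_def wcf_def dm by simp
  next
    case False
    then show ?thesis unfolding zcf_def wcf_def dm by (simp add: add.commute add.left_commute)
  qed
qed

end

text \<open>In fact z(L1(d) + n) = w(n) holds for every n.\<close>
theorem lemma20:
  fixes m d t :: nat and lam :: real
  assumes "m > 0" and "rho m \<ge> 2"
    and "-1 \<le> lam" and "lam < 0"
    and "d \<le> rho m - 1"
    and "t \<le> rho m * (kk m - 1 - pr m d) + d"
  shows "zs lam m d (L1 m d + hh m + t) = ws m d (hh m + t)"
proof -
  interpret cutoff m d
    by unfold_locales (use assms in auto)
  have "zs lam m d (L1 m d + hh m + t) = zcf (r * L + (hh m + t))"
    using zs_closed_form[OF assms(3,4)] L1_eq by (simp add: add.assoc)
  also have "\<dots> = ws m d (hh m + t)" using zcf_shift ws_closed_form by simp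
  finally show ?thesis .
qed

end
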